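(* For $|q|<1$, \begin{align*} \sum_{i,j,k\geq 0} \frac{q^{4i^2+\frac{3}{2}j^2+\frac{1}{2}k^2+4ij+ik-\frac{1}{2}j+\frac{1}{2}k}}{(q;q)_i(q;q)_j(q;q)_k} &=\frac{(-q;q)_\infty}{(q,q^4;q^5)_\infty}, \\ \sum_{i,j,k\geq 0} \frac{q^{4i^2+\frac{3}{2}j^2+\frac{1}{2}k^2+4ij+ik+2i+\frac{1}{2}j+\frac{1}{2}k}}{(q;q)_i(q;q)_j(q;q)_k} &=\frac{(-q;q)_\infty}{(q^2,q^3;q^5)_\infty}. \end{align*}
   Context: For $|q|<1$: $(a;q)_n=\prod_{k=0}^{n-1}(1-aq^k)$ ($(a;q)_0=1$), $(a;q)_\infty=\prod_{k\ge0}(1-aq^k)$, $(a_1,\dots,a_m;q)_\infty=\prod_\ell(a_\ell;q)_\infty$. Half-integer powers of $q$ use a fixed choice of $q^{1/2}$ (e.g. $0<q<1$). *)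

theory Defs
  imports "HOL-Analysis.Analysis"
begin

definition qpoch :: "complex \<Rightarrow> complex \<Rightarrow> nat \<Rightarrow> complex" where
  "qpoch a q n = (\<Prod>k<n. 1 - a * q ^ k)"

definition qpoch_inf :: "complex \<Rightarrow> complex \<Rightarrow> complex" where
  "qpoch_inf a q = (\<Prod>k. 1 - a * q ^ k)"

end

theory Submission
  imports Defs
begin

section \<open>q-Pochhammer symbols\<close>

lemma qpoch_0 [simp]: "qpoch a q 0 = 1"
  by (simp add: qpoch_def)

lemma qpoch_Suc: "qpoch a q (Suc n) = qpoch a q n * (1 - a * q ^ n)"
  by (simp add: qpoch_def)

lemma qpoch_self_Suc: "qpoch q q (Suc n) = qpoch q q n * (1 - q ^ Suc n)"
  by (simp add: qpoch_Suc)

lemma qpoch_add: "qpoch a q (n + m) = qpoch a q n * qpoch (a * q ^ n) q m"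
  by (induction m) (simp_all add: qpoch_Suc power_add mult_ac)

lemma norm_mult_power_less_1:
  fixes a q :: "'a::real_normed_div_algebra"
  assumes "norm a < 1" "norm q \<le> 1"
  shows "norm (a * q ^ k) < 1"
proof -
  have "norm (a * q ^ k) \<le> norm a"
    using assms by (simp add: norm_mult norm_power mult_left_le power_le_one)
  with assms show ?thesis by simp
qed

lemma qpoch_nonzero:
  assumes "norm a < 1" "norm q \<le> 1"
  shows "qpoch a q n \<noteq> 0"
proof -
  have "1 - a * q ^ k \<noteq> 0" for k
    using norm_mult_power_less_1[OF assms, of k] by auto
  then show ?thesis
    by (simp add: qpoch_def)
qed

lemma qpoch_self_nonzero: "norm q < 1 \<Longrightarrow> qpoch q q n \<noteq> 0"
  by (rule qpoch_nonzero) auto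

lemma convergent_prod_qpoch:
  assumes "norm q < 1"
  shows "convergent_prod (\<lambda>k. 1 - a * q ^ k :: complex)"
proof -
  have "summable (\<lambda>k. norm a * norm q ^ k)"
    using assms by (intro summable_mult summable_geometric) auto
  then have "abs_convergent_prod (\<lambda>k. 1 - a * q ^ k)"
    by (intro summable_imp_abs_convergent_prod) (simp add: norm_mult norm_power)
  then show ?thesis
    by (rule abs_convergent_prod_imp_convergent_prod)
qed

lemma LIMSEQ_qpoch:
  assumes "norm q < 1"
  shows "(\<lambda>n. qpoch a q n) \<longlonglongrightarrow> qpoch_inf a q"
proof -
  have "(\<lambda>n. qpoch a q (Suc n)) \<longlonglongrightarrow> qpoch_inf a q"
    using convergent_prod_LIMSEQ[OF convergent_prod_qpoch[OF assms]]
    by (simp add: qpoch_inf_def qpoch_def lessThan_Suc_atMost)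
  then show ?thesis
    by (rule LIMSEQ_imp_Suc)
qed

lemma qpoch_inf_split:
  assumes "norm q < 1"
  shows "qpoch_inf a q = qpoch a q n * qpoch_inf (a * q ^ n) q"
proof (rule LIMSEQ_unique)
  show "(\<lambda>m. qpoch a q (m + n)) \<longlonglongrightarrow> qpoch_inf a q"
    by (rule LIMSEQ_ignore_initial_segment[OF LIMSEQ_qpoch[OF assms]])
  show "(\<lambda>m. qpoch a q (m + n)) \<longlonglongrightarrow> qpoch a q n * qpoch_inf (a * q ^ n) q"
    unfolding add.commute[of _ n] qpoch_add by (intro tendsto_mult tendsto_const LIMSEQ_qpoch assms)
qed

lemma qpoch_inf_nonzero:
  assumes "norm q < 1" "norm a < 1"
  shows "qpoch_inf a q \<noteq> 0"
  unfolding qpoch_inf_def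
proof (rule prodinf_nonzero[OF convergent_prod_qpoch[OF assms(1)]])
  show "1 - a * q ^ k \<noteq> 0" for k
    using norm_mult_power_less_1[of a q k] assms by auto
qed

lemma qpoch_inf_self_nonzero: "norm q < 1 \<Longrightarrow> qpoch_inf q q \<noteq> 0"
  by (rule qpoch_inf_nonzero) auto

lemma qpoch_inf_eq_0:
  assumes "norm q < 1" "a * q ^ k = 1"
  shows "qpoch_inf a q = 0"
  using qpoch_inf_split[OF assms(1), of a "Suc k"] assms(2) by (simp add: qpoch_Suc)

text \<open>
  For \<open>r = norm q\<close>, the real products \<open>(r;r)\<^sub>n\<close> and \<open>(r;r)\<^sub>\<infinity>\<close> bound \<open>norm ((q;q)\<^sub>n)\<close>
  from below, uniformly in \<open>n\<close>; this gives the dominating functions for Tannery's theorem.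
\<close>

definition rqpoch :: "real \<Rightarrow> nat \<Rightarrow> real" where
  "rqpoch r n = (\<Prod>k<n. 1 - r ^ Suc k)"

definition rqpoch_inf :: "real \<Rightarrow> real" where
  "rqpoch_inf r = (\<Prod>k. 1 - r ^ Suc k)"

lemma power_Suc_less_1: "0 \<le> r \<Longrightarrow> r < 1 \<Longrightarrow> (r::real) ^ Suc k < 1"
  by (simp only: power_less_one_iff) simp

lemma rqpoch_Suc: "rqpoch r (Suc n) = rqpoch r n * (1 - r ^ Suc n)"
  by (simp add: rqpoch_def)

lemma rqpoch_pos: "0 \<le> r \<Longrightarrow> r < 1 \<Longrightarrow> 0 < rqpoch r n"
  unfolding rqpoch_def by (intro prod_pos) (simp add: power_Suc_less_1 del: power_Suc)

lemma norm_qpoch_ge_rqpoch: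
  assumes "norm q < 1"
  shows "rqpoch (norm q) n \<le> norm (qpoch q q n)"
  unfolding rqpoch_def qpoch_def prod_norm[symmetric]
proof (rule prod_mono)
  fix k
  have "1 - norm (q * q ^ k) \<le> norm (1 - q * q ^ k)"
    by (metis norm_one norm_triangle_ineq2)
  then show "0 \<le> 1 - norm q ^ Suc k \<and> 1 - norm q ^ Suc k \<le> norm (1 - q * q ^ k)"
    using assms power_Suc_less_1[of "norm q" k] by (simp add: norm_mult norm_power)
qed

lemma convergent_prod_rqpoch:
  fixes r :: real
  assumes "0 \<le> r" "r < 1"
  shows "convergent_prod (\<lambda>k. 1 - r ^ Suc k)"
proof -
  have "summable (\<lambda>k. r * r ^ k)"
    by (rule summable_mult, rule summable_geometric) (use assms in simp)
  then have "abs_convergent_prod (\<lambda>k. 1 - r ^ Suc k)"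
    using assms by (intro summable_imp_abs_convergent_prod) simp
  then show ?thesis
    by (rule abs_convergent_prod_imp_convergent_prod)
qed

lemma rqpoch_inf_pos: "0 \<le> r \<Longrightarrow> r < 1 \<Longrightarrow> 0 < rqpoch_inf r"
  unfolding rqpoch_inf_def
  by (rule less_0_prodinf[OF convergent_prod_rqpoch]) (simp_all add: power_Suc_less_1 del: power_Suc)

lemma rqpoch_inf_le_rqpoch: "0 \<le> r \<Longrightarrow> r < 1 \<Longrightarrow> rqpoch_inf r \<le> rqpoch r n"
  unfolding rqpoch_inf_def rqpoch_def
  by (rule prod_ge_prodinf[OF convergent_prod_has_prod[OF convergent_prod_rqpoch]])
     (simp_all add: less_imp_le[OF power_Suc_less_1] del: power_Suc)

lemma inverse_rqpoch_le: "0 \<le> r \<Longrightarrow> r < 1 \<Longrightarrow> 1 / rqpoch r n \<le> 1 / rqpoch_inf r"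
  by (simp add: frac_le rqpoch_inf_pos rqpoch_inf_le_rqpoch)

lemma norm_inverse_qpoch_le:
  assumes "norm q < 1"
  shows "norm (1 / qpoch q q n) \<le> 1 / rqpoch_inf (norm q)"
proof -
  have "norm (1 / qpoch q q n) \<le> 1 / rqpoch (norm q) n"
    using assms by (simp add: norm_divide frac_le rqpoch_pos norm_qpoch_ge_rqpoch)
  also have "\<dots> \<le> 1 / rqpoch_inf (norm q)"
    using assms by (simp add: inverse_rqpoch_le)
  finally show ?thesis .
qed

section \<open>Gaussian binomial coefficients\<close>

fun qbinom :: "complex \<Rightarrow> nat \<Rightarrow> nat \<Rightarrow> complex" where
  "qbinom q 0 k = (if k = 0 then 1 else 0)"
| "qbinom q (Suc n) k = (if k = 0 then 1 else qbinom q n (k - 1) + q ^ k * qbinom q n k)"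

lemma qbinom_0_right [simp]: "qbinom q n 0 = 1"
  by (cases n) auto

lemma qbinom_Suc_Suc: "qbinom q (Suc n) (Suc k) = qbinom q n k + q ^ Suc k * qbinom q n (Suc k)"
  by simp

lemma qbinom_eq_0: "n < k \<Longrightarrow> qbinom q n k = 0"
  by (induction n arbitrary: k) auto

lemma qbinom_self [simp]: "qbinom q n n = 1"
  by (induction n) (auto simp: qbinom_eq_0)

lemma qbinom_mult_qpoch:
  "k \<le> n \<Longrightarrow> qbinom q n k * qpoch q q k * qpoch q q (n - k) = qpoch q q n"
proof (induction n arbitrary: k)
  case 0
  then show ?case by simp
next
  case (Suc n)
  show ?case
  proof (cases k)
    case 0
    then show ?thesis by simp
  next
    case (Suc j)
    with Suc.prems have "j \<le> n" by simp
    have first: "qbinom q n j * qpoch q q (Suc j) * qpoch q q (n - j) = qpoch q q n * (1 - q ^ Suc j)"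
      using Suc.IH[OF \<open>j \<le> n\<close>] by (simp add: qpoch_self_Suc mult_ac del: power_Suc)
    have second: "q ^ Suc j * qbinom q n (Suc j) * qpoch q q (Suc j) * qpoch q q (n - j)
        = qpoch q q n * (q ^ Suc j - q ^ Suc n)"
    proof (cases "j = n")
      case True
      then show ?thesis by (simp add: qbinom_eq_0)
    next
      case False
      with \<open>j \<le> n\<close> have "Suc j \<le> n" and n_j: "n - j = Suc (n - Suc j)" by auto
      have "qpoch q q (n - j) = qpoch q q (n - Suc j) * (1 - q ^ (n - j))"
        by (simp only: n_j qpoch_self_Suc)
      then have "q ^ Suc j * qbinom q n (Suc j) * qpoch q q (Suc j) * qpoch q q (n - j)
          = q ^ Suc j * (1 - q ^ (n - j)) * (qbinom q n (Suc j) * qpoch q q (Suc j) * qpoch q q (n - Suc j))"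
        by (simp add: mult_ac)
      also have "\<dots> = (q ^ Suc j - q ^ Suc n) * qpoch q q n"
        using Suc.IH[OF \<open>Suc j \<le> n\<close>] \<open>j \<le> n\<close>
        by (simp add: right_diff_distrib flip: power_add del: power_Suc)
      finally show ?thesis
        by (simp add: mult.commute)
    qed
    have "qbinom q (Suc n) k * qpoch q q k * qpoch q q (Suc n - k)
        = qbinom q n j * qpoch q q (Suc j) * qpoch q q (n - j)
          + q ^ Suc j * qbinom q n (Suc j) * qpoch q q (Suc j) * qpoch q q (n - j)"
      by (simp add: Suc algebra_simps del: power_Suc)
    also have "\<dots> = qpoch q q n * (1 - q ^ Suc j) + qpoch q q n * (q ^ Suc j - q ^ Suc n)"
      by (simp only: first second)
    also have "\<dots> = qpoch q q (Suc n)"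
      by (simp add: qpoch_self_Suc algebra_simps del: power_Suc)
    finally show ?thesis .
  qed
qed

lemma qbinom_eq_qpoch_divide:
  assumes "norm q < 1" "k \<le> n"
  shows "qbinom q n k = qpoch q q n / (qpoch q q k * qpoch q q (n - k))"
  using qbinom_mult_qpoch[OF assms(2), of q] qpoch_self_nonzero[OF assms(1)]
  by (simp add: field_simps)

lemma qbinom_symmetric:
  assumes "norm q < 1" "k \<le> n"
  shows "qbinom q n (n - k) = qbinom q n k"
  using assms by (simp add: qbinom_eq_qpoch_divide mult.commute)

lemma qbinom_Suc_Suc':
  assumes "norm q < 1" "k \<le> n"
  shows "qbinom q (Suc n) (Suc k) = qbinom q n (Suc k) + q ^ (n - k) * qbinom q n k"
proof (cases "k = n")
  case True
  then show ?thesis by (simp add: qbinom_eq_0)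
next
  case False
  with assms have "k < n" by simp
  have "qbinom q (Suc n) (Suc k) = qbinom q (Suc n) (Suc (n - Suc k))"
    using qbinom_symmetric[OF assms(1), of "Suc k" "Suc n"] \<open>k < n\<close> by (simp add: Suc_diff_Suc)
  also have "\<dots> = qbinom q n (n - Suc k) + q ^ (n - k) * qbinom q n (n - k)"
    using \<open>k < n\<close> by (simp add: Suc_diff_Suc)
  also have "\<dots> = qbinom q n (Suc k) + q ^ (n - k) * qbinom q n k"
    using qbinom_symmetric[OF assms(1)] \<open>k < n\<close> by simp
  finally show ?thesis .
qed

lemma qbinom_Suc_right:
  assumes "norm q < 1" "k < n"
  shows "(1 - q ^ Suc k) * qbinom q n (Suc k) = (1 - q ^ (n - k)) * qbinom q n k"
proof -
  have n_k: "n - k = Suc (n - Suc k)"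
    using assms(2) by simp
  have "qpoch q q k * qpoch q q (n - Suc k) * ((1 - q ^ Suc k) * qbinom q n (Suc k)) = qpoch q q n"
    using qbinom_mult_qpoch[of "Suc k" n q] assms(2) by (simp add: qpoch_self_Suc mult_ac del: power_Suc)
  also have "\<dots> = qpoch q q k * qpoch q q (n - Suc k) * ((1 - q ^ (n - k)) * qbinom q n k)"
    using qbinom_mult_qpoch[of k n q] assms(2) unfolding n_k
    by (simp add: qpoch_self_Suc mult_ac del: power_Suc)
  finally show ?thesis
    using qpoch_self_nonzero[OF assms(1)] by (simp del: power_Suc)
qed

lemma norm_qbinom_le_rqpoch:
  assumes "norm q < 1"
  shows "norm (qbinom q n k) \<le> 1 / rqpoch (norm q) k"
proof (induction n arbitrary: k)
  case 0
  then show ?case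
    using rqpoch_pos[of "norm q" k] assms by (simp add: rqpoch_def)
next
  case (Suc n)
  show ?case
  proof (cases k)
    case 0
    then show ?thesis by (simp add: rqpoch_def)
  next
    case (Suc j)
    let ?r = "norm q"
    have "0 < rqpoch ?r j" "0 < 1 - ?r ^ Suc j"
      using assms rqpoch_pos[of ?r j] power_Suc_less_1[of ?r j] by simp_all
    have "norm (qbinom q (Suc n) k) \<le> norm (qbinom q n j) + ?r ^ Suc j * norm (qbinom q n (Suc j))"
      using Suc by (simp add: norm_mult norm_power norm_triangle_le del: power_Suc)
    also have "\<dots> \<le> 1 / rqpoch ?r j + ?r ^ Suc j * (1 / rqpoch ?r (Suc j))"
      by (intro add_mono mult_left_mono Suc.IH) auto
    also have "\<dots> = 1 / rqpoch ?r (Suc j)"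
      using \<open>0 < rqpoch ?r j\<close> \<open>0 < 1 - ?r ^ Suc j\<close> by (simp add: rqpoch_Suc field_simps del: power_Suc)
    finally show ?thesis
      using Suc by simp
  qed
qed

lemma norm_qbinom_le:
  assumes "norm q < 1"
  shows "norm (qbinom q n k) \<le> 1 / rqpoch_inf (norm q)"
  using norm_qbinom_le_rqpoch[OF assms, of n k] inverse_rqpoch_le[of "norm q" k] assms by simp

section \<open>Tannery's theorem and limits of Gaussian binomials\<close>

lemma integrable_count_space_iff_norm_summable_on:
  fixes f :: "'a \<Rightarrow> 'b::{banach,second_countable_topology}"
  shows "integrable (count_space A) f \<longleftrightarrow> (\<lambda>x. norm (f x)) summable_on A"
  using abs_summable_equivalent[of f A] unfolding Infinite_Set_Sum.abs_summable_on_def by simp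

text \<open>Tannery's theorem is dominated convergence on the counting measure.\<close>

lemma tannery_infsum:
  fixes f :: "nat \<Rightarrow> 'a \<Rightarrow> 'b::{banach,second_countable_topology}" and M :: "'a \<Rightarrow> real"
  assumes M: "M summable_on A"
    and bound: "\<And>n x. x \<in> A \<Longrightarrow> norm (f n x) \<le> M x"
    and lim: "\<And>x. x \<in> A \<Longrightarrow> (\<lambda>n. f n x) \<longlonglongrightarrow> g x"
  shows "g summable_on A" and "(\<lambda>n. infsum (f n) A) \<longlonglongrightarrow> infsum g A"
proof -
  have int_M: "integrable (count_space A) M"
    unfolding integrable_count_space_iff_norm_summable_on
    using M summable_on_iff_abs_summable_on_real by blast
  have lim_AE: "AE x in count_space A. (\<lambda>n. f n x) \<longlonglongrightarrow> g x"
    and bound_AE: "\<And>n. AE x in count_space A. norm (f n x) \<le> M x"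
    using lim bound by (simp_all add: AE_count_space)
  note dc = integrable_dominated_convergence[OF _ _ int_M lim_AE bound_AE, simplified]
    integrable_dominated_convergence2[OF _ _ int_M lim_AE bound_AE, simplified]
    integral_dominated_convergence[OF _ _ int_M lim_AE bound_AE, simplified]
  show "g summable_on A"
    using dc(1) unfolding integrable_count_space_iff_norm_summable_on by (rule abs_summable_summable)
  have infsum_eq: "infsum h A = integral\<^sup>L (count_space A) h"
    if "integrable (count_space A) h" for h :: "'a \<Rightarrow> 'b"
    using that infsetsum_infsum[of h A] unfolding Infinite_Set_Sum.abs_summable_on_def infsetsum_def
    by (simp only: eq_commute)
  show "(\<lambda>n. infsum (f n) A) \<longlonglongrightarrow> infsum g A"
    unfolding infsum_eq[OF dc(1)] infsum_eq[OF dc(2)] by (rule dc(3))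
qed

lemma tannery_has_sum:
  fixes f :: "nat \<Rightarrow> 'a \<Rightarrow> 'b::{banach,second_countable_topology}" and M :: "'a \<Rightarrow> real"
  assumes "M summable_on A"
    and "\<And>n x. x \<in> A \<Longrightarrow> norm (f n x) \<le> M x"
    and "\<And>x. x \<in> A \<Longrightarrow> (\<lambda>n. f n x) \<longlonglongrightarrow> g x"
    and "(\<lambda>n. infsum (f n) A) \<longlonglongrightarrow> L"
  shows "(g has_sum L) A"
  using tannery_infsum[OF assms(1-3)] LIMSEQ_unique[OF _ assms(4)] by (metis has_sum_infsum)

lemma LIMSEQ_qpoch_filterlim:
  assumes "norm q < 1" "filterlim f at_top sequentially"
  shows "(\<lambda>n. qpoch a q (f n)) \<longlonglongrightarrow> qpoch_inf a q"
  using filterlim_compose[OF LIMSEQ_qpoch[OF assms(1)] assms(2)] by simp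

lemma LIMSEQ_qbinom_fixed:
  assumes q: "norm q < 1"
  shows "(\<lambda>n. qbinom q n k) \<longlonglongrightarrow> 1 / qpoch q q k"
proof (rule Lim_transform_eventually)
  have "qpoch_inf q q \<noteq> 0" "qpoch q q k \<noteq> 0"
    using qpoch_inf_self_nonzero qpoch_self_nonzero q by auto
  then show "(\<lambda>n. qpoch q q n / (qpoch q q k * qpoch q q (n - k))) \<longlonglongrightarrow> 1 / qpoch q q k"
    using LIMSEQ_qpoch[OF q] LIMSEQ_qpoch_filterlim[OF q filterlim_minus_const_nat_at_top]
    by (auto intro!: tendsto_eq_intros)
  show "\<forall>\<^sub>F n in sequentially. qpoch q q n / (qpoch q q k * qpoch q q (n - k)) = qbinom q n k"
    using eventually_ge_at_top[of k] by eventually_elim (simp add: qbinom_eq_qpoch_divide[OF q])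
qed

lemma LIMSEQ_qbinom:
  assumes q: "norm q < 1"
    and a: "filterlim a at_top sequentially" "filterlim (\<lambda>n. n - a n) at_top sequentially"
    and le: "\<forall>\<^sub>F n in sequentially. a n \<le> n"
  shows "(\<lambda>n. qbinom q n (a n)) \<longlonglongrightarrow> 1 / qpoch_inf q q"
proof (rule Lim_transform_eventually)
  have "qpoch_inf q q \<noteq> 0"
    using qpoch_inf_self_nonzero q by auto
  then show "(\<lambda>n. qpoch q q n / (qpoch q q (a n) * qpoch q q (n - a n))) \<longlonglongrightarrow> 1 / qpoch_inf q q"
    using LIMSEQ_qpoch[OF q] LIMSEQ_qpoch_filterlim[OF q a(1)] LIMSEQ_qpoch_filterlim[OF q a(2)]
    by (auto intro!: tendsto_eq_intros)
  show "\<forall>\<^sub>F n in sequentially. qpoch q q n / (qpoch q q (a n) * qpoch q q (n - a n)) = qbinom q n (a n)"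
    using le by eventually_elim (simp add: qbinom_eq_qpoch_divide[OF q])
qed

section \<open>Euler's identities and the Jacobi triple product\<close>

lemma Suc_choose_two: "Suc k choose 2 = (k choose 2) + k"
  by (simp add: numeral_2_eq_2)

lemma q_binomial_theorem: "qpoch (-z) q n = (\<Sum>k\<le>n. q ^ (k choose 2) * z ^ k * qbinom q n k)"
proof (induction n arbitrary: z)
  case 0
  then show ?case by (simp add: binomial_eq_0)
next
  case (Suc n)
  define g where "g z k = q ^ (k choose 2) * z ^ k * qbinom q n k" for z k
  have term_Suc: "q ^ (Suc k choose 2) * z ^ Suc k * qbinom q (Suc n) (Suc k) = z * g (z * q) k + g (z * q) (Suc k)"
    for k by (simp add: g_def Suc_choose_two power_add power_mult_distrib algebra_simps)
  have "(\<Sum>k\<le>Suc n. q ^ (k choose 2) * z ^ k * qbinom q (Suc n) k)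
      = z * (\<Sum>k\<le>n. g (z * q) k) + (1 + (\<Sum>k\<le>n. g (z * q) (Suc k)))"
    by (simp only: sum.atMost_Suc_shift term_Suc sum.distrib sum_distrib_left) (simp add: binomial_eq_0)
  also have "1 + (\<Sum>k\<le>n. g (z * q) (Suc k)) = (\<Sum>k\<le>Suc n. g (z * q) k)"
    by (simp only: sum.atMost_Suc_shift) (simp add: g_def binomial_eq_0)
  also have "\<dots> = (\<Sum>k\<le>n. g (z * q) k)"
    by (simp add: g_def qbinom_eq_0)
  also have "z * (\<Sum>k\<le>n. g (z * q) k) + (\<Sum>k\<le>n. g (z * q) k) = (1 + z) * qpoch (-(z * q)) q n"
    by (simp add: Suc.IH g_def algebra_simps)
  also have "\<dots> = qpoch (-z) q (Suc n)"
    using qpoch_add[of "-z" q 1 n] by (simp add: qpoch_def)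
  finally show ?case
    by (rule sym)
qed

lemma sum_qbinom_alternating: "(\<Sum>j\<le>k. q ^ (j choose 2) * (-1) ^ j * qbinom q k j) = (if k = 0 then 1 else 0)"
proof -
  have "(\<Sum>j\<le>k. q ^ (j choose 2) * (-1) ^ j * qbinom q k j) = qpoch 1 q k"
    using q_binomial_theorem[of "-1" q k] by simp
  also have "\<dots> = (if k = 0 then 1 else 0)"
    by (cases k) (simp_all add: qpoch_def lessThan_Suc_eq_insert_0)
  finally show ?thesis .
qed

lemma summable_power_choose_two:
  fixes s u :: real
  assumes s: "0 \<le> s" "s < 1" and u: "0 \<le> u"
  shows "summable (\<lambda>k. s ^ (k choose 2) * u ^ k)"
proof -
  have "(\<lambda>n. s ^ n * u) \<longlonglongrightarrow> 0 * u"
    by (intro tendsto_mult LIMSEQ_power_zero tendsto_const) (use s in auto)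
  then obtain N where N: "\<And>n. n \<ge> N \<Longrightarrow> s ^ n * u < 1/2"
    using order_tendstoD(2)[of _ "0 * u" sequentially "1/2"] by (auto simp: eventually_sequentially)
  show ?thesis
  proof (rule summable_ratio_test[of "1/2" N])
    fix n assume "n \<ge> N"
    have "s ^ (Suc n choose 2) * u ^ Suc n = (s ^ n * u) * (s ^ (n choose 2) * u ^ n)"
      by (simp add: Suc_choose_two power_add mult_ac)
    also have "\<dots> \<le> 1/2 * (s ^ (n choose 2) * u ^ n)"
      using N[OF \<open>n \<ge> N\<close>] s u by (intro mult_right_mono) auto
    finally show "norm (s ^ (Suc n choose 2) * u ^ Suc n) \<le> 1/2 * norm (s ^ (n choose 2) * u ^ n)"
      using s u by simp
  qed simp
qed

lemma infsum_eq_sum_atMost: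
  fixes f :: "nat \<Rightarrow> 'a::{topological_comm_monoid_add,t2_space}"
  assumes "\<And>k. n < k \<Longrightarrow> f k = 0"
  shows "infsum f UNIV = (\<Sum>k\<le>n. f k)"
  by (rule infsumI, rule has_sum_finite_neutralI) (use assms in \<open>auto simp: not_le\<close>)

theorem euler_qpoch_inf:
  assumes q: "norm q < 1"
  shows "((\<lambda>k. q ^ (k choose 2) * z ^ k / qpoch q q k) has_sum qpoch_inf (-z) q) UNIV"
proof (rule tannery_has_sum)
  let ?K = "1 / rqpoch_inf (norm q)"
  show "(\<lambda>k. ?K * (norm q ^ (k choose 2) * norm z ^ k)) summable_on UNIV"
    using q rqpoch_inf_pos[of "norm q"]
    by (intro summable_nonneg_imp_summable_on summable_mult summable_power_choose_two) auto
  show "norm (q ^ (k choose 2) * z ^ k * qbinom q n k) \<le> ?K * (norm q ^ (k choose 2) * norm z ^ k)"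
    for n k
    using mult_left_mono[OF norm_qbinom_le[OF q, of n k], of "norm q ^ (k choose 2) * norm z ^ k"]
    by (simp add: norm_mult norm_power)
  show "(\<lambda>n. q ^ (k choose 2) * z ^ k * qbinom q n k) \<longlonglongrightarrow> q ^ (k choose 2) * z ^ k / qpoch q q k"
    for k using tendsto_mult_left[OF LIMSEQ_qbinom_fixed[OF q]] by simp
  have "infsum (\<lambda>k. q ^ (k choose 2) * z ^ k * qbinom q n k) UNIV = qpoch (-z) q n" for n
    by (subst infsum_eq_sum_atMost[of n]) (simp_all add: qbinom_eq_0 q_binomial_theorem)
  then show "(\<lambda>n. infsum (\<lambda>k. q ^ (k choose 2) * z ^ k * qbinom q n k) UNIV) \<longlonglongrightarrow> qpoch_inf (-z) q"
    using LIMSEQ_qpoch[OF q] by simp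
qed

lemma euler_cauchy_product_coeff:
  assumes q: "norm q < 1"
  shows "(\<Sum>i\<le>k. z ^ i / qpoch q q i * (q ^ ((k - i) choose 2) * (-z) ^ (k - i) / qpoch q q (k - i)))
    = (if k = 0 then 1 else 0)"
proof -
  have "z ^ i / qpoch q q i * (q ^ ((k - i) choose 2) * (-z) ^ (k - i) / qpoch q q (k - i))
      = z ^ k / qpoch q q k * (q ^ ((k - i) choose 2) * (-1) ^ (k - i) * qbinom q k (k - i))"
    if "i \<le> k" for i
  proof -
    have "qbinom q k (k - i) * qpoch q q (k - i) * qpoch q q i = qpoch q q k"
      using qbinom_mult_qpoch[of "k - i" k q] that by simp
    moreover have "z ^ k = z ^ i * z ^ (k - i)"
      using that by (simp flip: power_add)
    ultimately show ?thesis
      using qpoch_self_nonzero[OF q] by (simp add: power_minus' field_simps)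
  qed
  then have "(\<Sum>i\<le>k. z ^ i / qpoch q q i * (q ^ ((k - i) choose 2) * (-z) ^ (k - i) / qpoch q q (k - i)))
      = z ^ k / qpoch q q k * (\<Sum>i\<le>k. q ^ ((k - i) choose 2) * (-1) ^ (k - i) * qbinom q k (k - i))"
    by (simp add: sum_distrib_left)
  also have "(\<Sum>i\<le>k. q ^ ((k - i) choose 2) * (-1) ^ (k - i) * qbinom q k (k - i))
      = (\<Sum>j\<le>k. q ^ (j choose 2) * (-1) ^ j * qbinom q k j)"
    using sum.atLeastAtMost_rev[of "\<lambda>j. q ^ (j choose 2) * (-1) ^ j * qbinom q k j" 0 k]
    by (simp add: atMost_atLeast0)
  finally show ?thesis
    by (simp add: sum_qbinom_alternating)
qed

theorem euler_inverse_qpoch_inf: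
  assumes q: "norm q < 1" and z: "norm z < 1"
  shows "((\<lambda>k. z ^ k / qpoch q q k) has_sum (1 / qpoch_inf z q)) UNIV"
proof -
  define a where "a k = z ^ k / qpoch q q k" for k
  define b where "b k = q ^ (k choose 2) * (-z) ^ k / qpoch q q k" for k
  have b: "(b has_sum qpoch_inf z q) UNIV"
    unfolding b_def using euler_qpoch_inf[OF q, of "-z"] by simp
  have norm_a: "summable (\<lambda>k. norm (a k))"
  proof (rule summable_comparison_test)
    have "norm (a n) \<le> norm z ^ n * (1 / rqpoch_inf (norm q))" for n
    proof -
      have "norm (a n) = norm z ^ n * norm (1 / qpoch q q n)"
        by (simp add: a_def norm_divide norm_power)
      also have "\<dots> \<le> norm z ^ n * (1 / rqpoch_inf (norm q))"
        by (rule mult_left_mono[OF norm_inverse_qpoch_le[OF q]]) simp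
      finally show ?thesis .
    qed
    then show "\<exists>N. \<forall>n\<ge>N. norm (norm (a n)) \<le> norm z ^ n * (1 / rqpoch_inf (norm q))"
      by simp
    show "summable (\<lambda>n. norm z ^ n * (1 / rqpoch_inf (norm q)))"
      using z by (intro summable_mult2 summable_geometric) simp
  qed
  have norm_b: "summable (\<lambda>k. norm (b k))"
    using has_sum_imp_summable[OF b] summable_on_iff_abs_summable_on_complex summable_on_imp_summable
    by blast
  have "(\<lambda>k. \<Sum>i\<le>k. a i * b (k - i)) sums (suminf a * suminf b)"
    by (rule Cauchy_product_sums[OF norm_a norm_b])
  moreover have "(\<Sum>i\<le>k. a i * b (k - i)) = (if k = 0 then 1 else 0)" for k
    unfolding a_def b_def by (rule euler_cauchy_product_coeff[OF q])
  then have "(\<lambda>k. \<Sum>i\<le>k. a i * b (k - i)) sums 1"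
    using sums_single[of 0 "\<lambda>_. 1::complex"] by simp
  moreover have "suminf b = qpoch_inf z q"
    using has_sum_imp_sums[OF b] by (simp add: sums_iff)
  ultimately have "suminf a = 1 / qpoch_inf z q"
    using qpoch_inf_nonzero[OF q z] sums_unique2 by (fastforce simp: field_simps)
  moreover have "(a has_sum suminf a) UNIV"
    by (rule norm_summable_imp_has_sum[OF norm_a summable_sums[OF summable_norm_cancel[OF norm_a]]])
  ultimately show ?thesis
    by (simp add: a_def[abs_def])
qed

definition choose2 :: "int \<Rightarrow> int" where
  "choose2 k = k * (k - 1) div 2"

lemma choose2_add: "choose2 (a + b) = choose2 a + choose2 b + a * b"
proof -
  have "(a + b) * (a + b - 1) = a * (a - 1) + b * (b - 1) + (a * b) * 2"
    by (simp add: algebra_simps)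
  then show ?thesis
    by (simp add: choose2_def div_plus_div_distrib_dvd_left)
qed

lemma choose2_succ: "choose2 (k + 1) = choose2 k + k"
proof -
  have "choose2 1 = 0"
    by (simp add: choose2_def)
  then show ?thesis
    using choose2_add[of k 1] by simp
qed

lemma choose2_of_nat: "choose2 (int n) = int (n choose 2)"
proof (induction n)
  case 0
  then show ?case by (simp add: choose2_def binomial_eq_0)
next
  case (Suc n)
  have "choose2 (int (Suc n)) = choose2 (int n + 1)"
    by (simp add: add.commute)
  also have "\<dots> = choose2 (int n) + int n"
    by (rule choose2_succ)
  finally show ?case
    using Suc.IH by (simp add: Suc_choose_two)
qed

lemma choose2_neg: "choose2 (- int n - 1) = int (Suc (Suc n) choose 2)"
proof -
  have "choose2 (- int n - 1) = choose2 (int n + 1) + (int n + 1)"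
    using choose2_add[of "- int n - 1" "int n + 1"] by (simp add: choose2_def algebra_simps)
  then show ?thesis
    by (simp add: choose2_succ choose2_of_nat Suc_choose_two)
qed

lemma summable_on_int_split:
  fixes f :: "int \<Rightarrow> 'b::banach"
  assumes "(\<lambda>n. f (int n)) summable_on UNIV" "(\<lambda>n. f (- int n - 1)) summable_on UNIV"
  shows "f summable_on UNIV"
proof -
  have UNIV_int: "UNIV = range int \<union> range (\<lambda>n. - int n - 1)"
    by (auto simp: image_iff) presburger
  have "f summable_on range int" "f summable_on range (\<lambda>n. - int n - 1)"
    using assms by (simp_all add: summable_on_reindex inj_on_def o_def)
  then show ?thesis
    unfolding UNIV_int by (rule summable_on_Un_disjoint) auto
qed

lemma summable_theta:
  fixes s u :: real
  assumes s: "0 \<le> s" "s < 1" and u: "0 < u"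
  shows "(\<lambda>k. s powi choose2 k * u powi k) summable_on UNIV"
proof (rule summable_on_int_split)
  show "(\<lambda>n. s powi choose2 (int n) * u powi int n) summable_on UNIV"
    using s u by (simp add: choose2_of_nat summable_nonneg_imp_summable_on summable_power_choose_two)
  have "summable (\<lambda>n. u * (s ^ (Suc (Suc n) choose 2) * (1 / u) ^ Suc (Suc n)))"
    using summable_power_choose_two[of s "1 / u"] s u
    by (intro summable_mult summable_ignore_initial_segment[where k = 2, simplified]) simp_all
  moreover have "s powi choose2 (- int n - 1) * u powi (- int n - 1)
      = u * (s ^ (Suc (Suc n) choose 2) * (1 / u) ^ Suc (Suc n))" for n
    using u by (simp add: choose2_neg power_int_diff power_int_minus power_one_over field_simps)
  ultimately show "(\<lambda>n. s powi choose2 (- int n - 1) * u powi (- int n - 1)) summable_on UNIV"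
    using s u by (simp add: summable_nonneg_imp_summable_on)
qed

lemma summable_on_mult_product:
  fixes f :: "'a \<Rightarrow> 'c::{banach, real_normed_field, second_countable_topology}"
  assumes "countable A" "countable B"
    and "(\<lambda>x. norm (f x)) summable_on A" "(\<lambda>y. norm (g y)) summable_on B"
  shows "(\<lambda>(x, y). norm (f x * g y)) summable_on A \<times> B"
    and "(\<lambda>(x, y). f x * g y) summable_on A \<times> B"
proof -
  have "Infinite_Set_Sum.abs_summable_on (\<lambda>(x, y). f x * g y) (A \<times> B)"
    by (rule abs_summable_on_product) (use assms in \<open>simp_all flip: abs_summable_equivalent\<close>)
  then have norm_summable: "(\<lambda>z. norm ((\<lambda>(x, y). f x * g y) z)) summable_on A \<times> B"
    by (simp flip: abs_summable_equivalent)
  then show "(\<lambda>(x, y). norm (f x * g y)) summable_on A \<times> B"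
    by (simp add: case_prod_unfold)
  show "(\<lambda>(x, y). f x * g y) summable_on A \<times> B"
    by (rule abs_summable_summable[OF norm_summable])
qed

lemma qpoch_inf_power_int_nonneg:
  assumes "norm q < 1"
  shows "qpoch_inf (q powi (int j + 1)) q = qpoch_inf q q / qpoch q q j"
proof -
  have "q powi (int j + 1) = q * q ^ j"
    by (simp add: power_int_add_1')
  then show ?thesis
    using qpoch_inf_split[OF assms, of q j] qpoch_self_nonzero[OF assms, of j] by (simp add: field_simps)
qed

lemma qpoch_inf_power_int_neg:
  assumes "norm q < 1" "q \<noteq> 0" "n < 0"
  shows "qpoch_inf (q powi (n + 1)) q = 0"
proof (rule qpoch_inf_eq_0[OF assms(1)])
  show "q powi (n + 1) * q ^ nat (- n - 1) = 1"
    using assms(2,3) by (simp flip: power_int_of_nat power_int_add)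
qed

lemma jtp_inner_has_sum:
  assumes q: "norm q < 1" "q \<noteq> 0"
  shows "((\<lambda>m. (-1) powi (n + int m) * q powi (choose2 (n + int m) + int m) * w powi n / qpoch q q m)
    has_sum ((-1) powi n * q powi choose2 n * w powi n * qpoch_inf (q powi (n + 1)) q)) UNIV"
proof -
  define c where "c = (-1) powi n * q powi choose2 n * w powi n"
  have term_eq: "(-1) powi (n + int m) * q powi (choose2 (n + int m) + int m) * w powi n / qpoch q q m
      = c * (q ^ (m choose 2) * (- (q powi (n + 1))) ^ m / qpoch q q m)" for m
  proof -
    have "choose2 (n + int m) + int m = choose2 n + (int (m choose 2) + (n + 1) * int m)"
      by (simp add: choose2_add choose2_of_nat algebra_simps)
    then have "q powi (choose2 (n + int m) + int m) = q powi choose2 n * q ^ (m choose 2) * (q powi (n + 1)) ^ m"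
      using q(2) by (simp add: power_int_add power_int_mult mult.assoc flip: power_int_of_nat)
    then show ?thesis
      by (simp add: c_def power_int_add power_minus' mult_ac)
  qed
  show ?thesis
    unfolding term_eq using has_sum_cmult_right[OF euler_qpoch_inf[OF q(1)], of c "- (q powi (n + 1))"]
    by (simp add: c_def)
qed

lemma jtp_outer_has_sum:
  assumes q: "norm q < 1" "q \<noteq> 0"
  shows "((\<lambda>n. (-1) powi n * q powi choose2 n * w powi n * qpoch_inf (q powi (n + 1)) q)
    has_sum qpoch_inf q q * qpoch_inf w q) UNIV"
proof -
  let ?h = "\<lambda>n. (-1) powi n * q powi choose2 n * w powi n * qpoch_inf (q powi (n + 1)) q"
  have "?h (int j) = qpoch_inf q q * (q ^ (j choose 2) * (-w) ^ j / qpoch q q j)" for j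
    by (subst qpoch_inf_power_int_nonneg[OF q(1)]) (simp add: choose2_of_nat power_minus' field_simps)
  then have "((?h \<circ> int) has_sum qpoch_inf q q * qpoch_inf w q) UNIV"
    using has_sum_cmult_right[OF euler_qpoch_inf[OF q(1)], of "qpoch_inf q q" "-w"] by (simp add: o_def)
  then have "(?h has_sum qpoch_inf q q * qpoch_inf w q) (range int)"
    by (simp add: has_sum_reindex)
  moreover have "?h n = 0" if "n \<notin> range int" for n
  proof -
    from that have "n < 0"
      by (metis nonneg_int_cases not_le rangeI)
    then show ?thesis
      by (simp add: qpoch_inf_power_int_neg[OF q])
  qed
  ultimately show ?thesis
    by (rule has_sum_cong_neutral[THEN iffD1, rotated -1]) auto
qed

theorem jacobi_triple_product:
  assumes q: "norm q < 1" "q \<noteq> 0" and w: "w \<noteq> 0" "norm q < norm w"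
  shows "((\<lambda>k. (-1) powi k * q powi choose2 k * w powi k)
    has_sum (qpoch_inf w q * qpoch_inf (q / w) q * qpoch_inf q q)) UNIV"
proof -
  define \<theta> where "\<theta> = (\<lambda>k. (-1) powi k * q powi choose2 k * w powi k)"
  define e where "e = (\<lambda>m. (q / w) ^ m / qpoch q q m)"
  define P where "P = qpoch_inf (q / w) q"
  have "norm (q / w) < 1"
    using w by (simp add: norm_divide)
  then have e: "(e has_sum 1 / P) UNIV" and "P \<noteq> 0"
    unfolding e_def P_def using euler_inverse_qpoch_inf[OF q(1)] qpoch_inf_nonzero[OF q(1)] by auto
  have norm_\<theta>: "(\<lambda>k. norm (\<theta> k)) summable_on UNIV"
    using summable_theta[of "norm q" "norm w"] q w by (simp add: \<theta>_def norm_mult norm_power_int)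
  then have \<theta>: "(\<theta> has_sum infsum \<theta> UNIV) UNIV"
    by (rule has_sum_infsum[OF abs_summable_summable])
  have norm_e: "(\<lambda>m. norm (e m)) summable_on UNIV"
    using has_sum_imp_summable[OF e] summable_on_iff_abs_summable_on_complex by blast
  have summable_\<theta>e: "(\<lambda>(k, m). \<theta> k * e m) summable_on UNIV \<times> UNIV"
    by (rule summable_on_mult_product(2)[OF _ _ norm_\<theta> norm_e]) simp_all
  have "((\<lambda>(k, m). \<theta> k * e m) has_sum infsum \<theta> UNIV * (1 / P)) (UNIV \<times> UNIV)"
    by (rule has_sum_SigmaI[OF _ has_sum_cmult_left[OF \<theta>] summable_\<theta>e])
       (use has_sum_cmult_right[OF e] in simp)
  then have \<theta>e_shifted: "((\<lambda>(n, m). \<theta> (n + int m) * e m) has_sum infsum \<theta> UNIV * (1 / P)) (UNIV \<times> UNIV)"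
    by (subst has_sum_reindex_bij_witness[where j = "\<lambda>(n, m). (n + int m, m)" and i = "\<lambda>(k, m). (k - int m, m)"])
       auto
  have "\<theta> (n + int m) * e m
      = (-1) powi (n + int m) * q powi (choose2 (n + int m) + int m) * w powi n / qpoch q q m" for n m
    using q(2) w(1) by (simp add: \<theta>_def e_def power_int_add power_divide field_simps)
  then have "((\<lambda>m. \<theta> (n + int m) * e m)
      has_sum ((-1) powi n * q powi choose2 n * w powi n * qpoch_inf (q powi (n + 1)) q)) UNIV" for n
    by (simp only: jtp_inner_has_sum[OF q])
  then have "((\<lambda>n. (-1) powi n * q powi choose2 n * w powi n * qpoch_inf (q powi (n + 1)) q)
      has_sum infsum \<theta> UNIV * (1 / P)) UNIV"
    using has_sum_SigmaD[OF \<theta>e_shifted] by auto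
  then have "infsum \<theta> UNIV * (1 / P) = qpoch_inf q q * qpoch_inf w q"
    by (rule has_sum_unique[OF _ jtp_outer_has_sum[OF q]])
  then have "infsum \<theta> UNIV = qpoch_inf w q * P * qpoch_inf q q"
    using \<open>P \<noteq> 0\<close> by (simp add: field_simps)
  then show ?thesis
    using \<theta> by (simp add: \<theta>_def P_def)
qed

section \<open>Schur's polynomials and the Rogers-Ramanujan identities\<close>

text \<open>Extending Gaussian binomials by zero to all integer arguments makes the Pascal rules unconditional.\<close>

definition qbinom_int :: "complex \<Rightarrow> int \<Rightarrow> int \<Rightarrow> complex" where
  "qbinom_int q N K = (if 0 \<le> N \<and> 0 \<le> K then qbinom q (nat N) (nat K) else 0)"

lemma qbinom_int_of_nat [simp]: "qbinom_int q (int n) (int k) = qbinom q n k"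
  by (simp add: qbinom_int_def)

lemma qbinom_int_eq_0: "K < 0 \<or> N < K \<Longrightarrow> qbinom_int q N K = 0"
  by (auto simp: qbinom_int_def qbinom_eq_0)

lemma qbinom_int_0_right: "0 \<le> N \<Longrightarrow> qbinom_int q N 0 = 1"
  by (simp add: qbinom_int_def)

lemma qbinom_int_self: "0 \<le> N \<Longrightarrow> qbinom_int q N N = 1"
  by (simp add: qbinom_int_def)

lemma qbinom_int_nonzero_imp: "qbinom_int q N K \<noteq> 0 \<Longrightarrow> 0 \<le> K \<and> K \<le> N"
  by (metis not_le qbinom_int_eq_0)

lemma norm_qbinom_int_le: "norm q < 1 \<Longrightarrow> norm (qbinom_int q N K) \<le> 1 / rqpoch_inf (norm q)"
  using norm_qbinom_le[of q] rqpoch_inf_pos[of "norm q"] by (auto simp: qbinom_int_def)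

lemma qbinom_int_pascal:
  assumes "1 \<le> N"
  shows "qbinom_int q N K = qbinom_int q (N - 1) (K - 1) + q powi K * qbinom_int q (N - 1) K"
proof -
  define n where "n = nat (N - 1)"
  have N: "N = int (Suc n)" "N - 1 = int n"
    using assms by (simp_all add: n_def)
  consider "K < 0" | "K = 0" | "0 < K"
    by linarith
  then show ?thesis
  proof cases
    case 3
    define k where "k = nat (K - 1)"
    have "qbinom_int q (int (Suc n)) (int (Suc k))
        = qbinom_int q (int n) (int k) + q powi int (Suc k) * qbinom_int q (int n) (int (Suc k))"
      by (simp only: qbinom_int_of_nat power_int_of_nat qbinom_Suc_Suc)
    with 3 show ?thesis
      by (simp add: N k_def)
  qed (simp_all add: N qbinom_int_eq_0 qbinom_int_0_right)
qed

lemma qbinom_int_pascal':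
  assumes "norm q < 1" "1 \<le> N"
  shows "qbinom_int q N K = qbinom_int q (N - 1) K + q powi (N - K) * qbinom_int q (N - 1) (K - 1)"
proof -
  define n where "n = nat (N - 1)"
  have N: "N = int (Suc n)" "N - 1 = int n"
    using assms by (simp_all add: n_def)
  consider "K < 0 \<or> N < K" | "K = 0" | "0 < K" "K \<le> N"
    by linarith
  then show ?thesis
  proof cases
    case 3
    define k where "k = nat (K - 1)"
    with 3 N have "k \<le> n" "N - K = int (n - k)"
      by simp_all
    have "qbinom_int q (int (Suc n)) (int (Suc k))
        = qbinom_int q (int n) (int (Suc k)) + q powi int (n - k) * qbinom_int q (int n) (int k)"
      by (simp only: qbinom_int_of_nat power_int_of_nat qbinom_Suc_Suc'[OF assms(1) \<open>k \<le> n\<close>])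
    with 3 \<open>N - K = int (n - k)\<close> show ?thesis
      by (simp add: N k_def algebra_simps)
  qed (auto simp: N qbinom_int_eq_0 qbinom_int_0_right)
qed

lemma qbinom_int_Suc_right:
  assumes "norm q < 1"
  shows "(1 - q powi (K + 1)) * qbinom_int q N (K + 1) = (1 - q powi (N - K)) * qbinom_int q N K"
proof (cases "0 \<le> K \<and> K < N")
  case True
  define n k where "n = nat N" and "k = nat K"
  with True have "k < n" "K + 1 = int (Suc k)" "N - K = int (n - k)" "N = int n" "K = int k"
    by auto
  then show ?thesis
    by (simp only: power_int_of_nat qbinom_int_of_nat qbinom_Suc_right[OF assms])
next
  case False
  then have lhs: "(1 - q powi (K + 1)) * qbinom_int q N (K + 1) = 0"
    by (cases "K + 1 = 0") (auto simp: qbinom_int_eq_0)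
  have rhs: "(1 - q powi (N - K)) * qbinom_int q N K = 0"
    using False by (cases "N = K") (auto simp: qbinom_int_eq_0)
  show ?thesis
    by (simp only: lhs rhs)
qed

lemma qbinom_int_three_term:
  assumes q: "norm q < 1" "q \<noteq> 0" and "2 \<le> m"
  shows "qbinom_int q m a - qbinom_int q (m - 1) a - q powi (m - 1) * qbinom_int q (m - 2) (a - 1)
    = q powi (m - a) * qbinom_int q (m - 2) (a - 2)"
proof -
  define u w X Y where "u = q powi (m - a)" and "w = q powi (a - 1)"
    and "X = qbinom_int q (m - 2) (a - 2)" and "Y = qbinom_int q (m - 2) (a - 1)"
  have "qbinom_int q m a = qbinom_int q (m - 1) a + u * qbinom_int q (m - 1) (a - 1)"
    using qbinom_int_pascal'[OF q(1), of m a] \<open>2 \<le> m\<close> by (simp add: u_def)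
  moreover have "qbinom_int q (m - 1) (a - 1) = Y + u * X"
    using qbinom_int_pascal'[OF q(1), of "m - 1" "a - 1"] \<open>2 \<le> m\<close> by (simp add: u_def X_def Y_def algebra_simps)
  moreover have "q powi (m - 1) = u * w"
    using q(2) by (simp add: u_def w_def flip: power_int_add)
  ultimately have "qbinom_int q m a - qbinom_int q (m - 1) a - q powi (m - 1) * Y = u * ((1 - w) * Y + u * X)"
    by (simp add: algebra_simps)
  also have "(1 - w) * Y = (1 - u) * X"
    using qbinom_int_Suc_right[OF q(1), of "a - 2" "m - 2"] by (simp add: u_def w_def X_def Y_def algebra_simps)
  finally show ?thesis
    by (simp add: u_def X_def Y_def algebra_simps)
qed

lemma qbinom_int_three_term':
  assumes q: "norm q < 1" "q \<noteq> 0" and "2 \<le> m"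
  shows "qbinom_int q m c - qbinom_int q (m - 1) (c - 1) - q powi (m - 1) * qbinom_int q (m - 2) (c - 1)
    = q powi c * qbinom_int q (m - 2) c"
proof -
  define v w X Y where "v = q powi c" and "w = q powi (m - 1 - c)"
    and "X = qbinom_int q (m - 2) c" and "Y = qbinom_int q (m - 2) (c - 1)"
  have "qbinom_int q m c = qbinom_int q (m - 1) (c - 1) + v * qbinom_int q (m - 1) c"
    using qbinom_int_pascal[of m q c] \<open>2 \<le> m\<close> by (simp add: v_def)
  moreover have "qbinom_int q (m - 1) c = Y + v * X"
    using qbinom_int_pascal[of "m - 1" q c] \<open>2 \<le> m\<close> by (simp add: v_def X_def Y_def)
  moreover have "q powi (m - 1) = v * w"
    using q(2) by (simp add: v_def w_def flip: power_int_add)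
  ultimately have "qbinom_int q m c - qbinom_int q (m - 1) (c - 1) - q powi (m - 1) * Y = v * ((1 - w) * Y + v * X)"
    by (simp add: algebra_simps)
  also have "(1 - w) * Y = (1 - v) * X"
    using qbinom_int_Suc_right[OF q(1), of "c - 1" "m - 2"] by (simp add: v_def w_def X_def Y_def algebra_simps)
  finally show ?thesis
    by (simp add: v_def X_def Y_def algebra_simps)
qed

text \<open>
  Schur's polynomials in bosonic form
  \<open>\<Sum>\<^sub>l (-1)\<^sup>l q\<^bsup>l(5l+1)/2 - bl\<^esup> [m, \<lfloor>(m+b-5l)/2\<rfloor>]\<close> and in fermionic form
  \<open>\<Sum>\<^sub>j q\<^bsup>j\<^sup>2\<^esup> c\<^sup>j [n-j, j]\<close>; for \<open>(b, c) = (0, 1)\<close> and \<open>(2, q)\<close> both satisfy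
  \<open>f(m) = f(m - 1) + c q\<^bsup>m-2\<^esup> f(m - 2)\<close> (after a shift of the index), hence agree.
\<close>

definition bosonic_coeff :: "complex \<Rightarrow> int \<Rightarrow> int \<Rightarrow> complex" where
  "bosonic_coeff q b l = (-1) powi l * q powi (5 * choose2 l + (3 - b) * l)"

definition bosonic_term :: "complex \<Rightarrow> int \<Rightarrow> int \<Rightarrow> int \<Rightarrow> complex" where
  "bosonic_term q b m l = bosonic_coeff q b l * qbinom_int q m ((m + b - 5 * l) div 2)"

definition bosonic :: "complex \<Rightarrow> int \<Rightarrow> int \<Rightarrow> complex" where
  "bosonic q b m = infsum (bosonic_term q b m) UNIV"

definition fermionic :: "complex \<Rightarrow> complex \<Rightarrow> nat \<Rightarrow> complex" where
  "fermionic q c n = (\<Sum>j\<le>n. q ^ (j\<^sup>2) * c ^ j * qbinom_int q (int n - int j) (int j))"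

lemma int_div_2_bounds: "2 * (x div 2) \<le> x" "x \<le> 2 * (x div 2) + (1::int)"
  by presburger+

lemma bosonic_coeff_succ:
  assumes "q \<noteq> 0"
  shows "bosonic_coeff q b (l + 1) = - (q powi (5 * l + 3 - b) * bosonic_coeff q b l)"
proof -
  have "5 * choose2 (l + 1) + (3 - b) * (l + 1) = (5 * l + 3 - b) + (5 * choose2 l + (3 - b) * l)"
    unfolding choose2_succ by (simp add: algebra_simps)
  then show ?thesis
    using assms by (simp add: bosonic_coeff_def power_int_add_1 power_int_add)
qed

lemma bosonic_term_nonzero_imp:
  assumes "bosonic_term q b m l \<noteq> 0"
  shows "l \<in> {- (\<bar>m\<bar> + \<bar>b\<bar> + 1) .. \<bar>m\<bar> + \<bar>b\<bar> + 1}"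
proof -
  define d where "d = (m + b - 5 * l) div 2"
  have "0 \<le> d" "d \<le> m"
    using assms qbinom_int_nonzero_imp by (force simp: bosonic_term_def d_def)+
  moreover have "2 * d \<le> m + b - 5 * l" "m + b - 5 * l \<le> 2 * d + 1"
    unfolding d_def by (rule int_div_2_bounds)+
  ultimately show ?thesis
    by simp linarith
qed

lemma finite_bosonic_term_support: "finite {l. bosonic_term q b m l \<noteq> 0}"
  by (rule finite_subset[of _ "{- (\<bar>m\<bar> + \<bar>b\<bar> + 1) .. \<bar>m\<bar> + \<bar>b\<bar> + 1}"])
     (use bosonic_term_nonzero_imp in blast)+

lemma bosonic_term_summable: "bosonic_term q b m summable_on UNIV"
  using finite_bosonic_term_support by (intro finite_nonzero_values_imp_summable_on) simp

lemma bosonic_eq_single: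
  assumes "\<And>l. l \<noteq> 0 \<Longrightarrow> bosonic_term q b m l = 0"
  shows "bosonic q b m = qbinom_int q m ((m + b) div 2)"
proof -
  have "bosonic q b m = bosonic_term q b m 0"
    unfolding bosonic_def by (rule infsumI, rule has_sum_finite_neutralI[of "{0}"]) (use assms in auto)
  then show ?thesis
    by (simp add: bosonic_term_def bosonic_coeff_def choose2_def)
qed

lemma infsum_eq_0_by_pairs:
  fixes t :: "int \<Rightarrow> 'a::banach"
  assumes "t summable_on UNIV"
    and cancel: "\<And>l. P l \<Longrightarrow> t l + t (l + 1) = 0"
    and alternate: "\<And>l. P (l + 1) \<longleftrightarrow> \<not> P l"
  shows "infsum t UNIV = 0"
proof -
  define Q where "Q = {l. P l}"
  have shift: "UNIV - Q = (\<lambda>l. l + 1) ` Q"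
  proof safe
    fix x assume "x \<notin> Q"
    then have "x - 1 \<in> Q"
      using alternate[of "x - 1"] by (simp add: Q_def)
    then show "x \<in> (\<lambda>l. l + 1) ` Q"
      by (rule rev_image_eqI) simp
  qed (use alternate in \<open>auto simp: Q_def\<close>)
  have "t summable_on Q" "t summable_on UNIV - Q"
    using assms(1) by (auto intro: summable_on_subset_banach)
  then have "infsum t UNIV = infsum t Q + infsum t (UNIV - Q)"
    using infsum_Un_disjoint[of t Q "UNIV - Q"] by (simp add: Un_Diff_cancel)
  also have "infsum t (UNIV - Q) = infsum (\<lambda>l. t (l + 1)) Q"
    unfolding shift by (simp add: infsum_reindex inj_on_def o_def)
  also have "infsum t Q + infsum (\<lambda>l. t (l + 1)) Q = infsum (\<lambda>l. t l + t (l + 1)) Q"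
    using \<open>t summable_on UNIV - Q\<close> shift
    by (intro infsum_add[symmetric] \<open>t summable_on Q\<close>) (simp add: summable_on_reindex inj_on_def o_def)
  also have "\<dots> = 0"
    by (rule infsum_0) (simp add: Q_def cancel)
  finally show ?thesis .
qed

lemma bosonic_terms_cancel:
  assumes q: "norm q < 1" "q \<noteq> 0" and "2 \<le> m" and "odd (m + b - 5 * l)"
  defines "t \<equiv> \<lambda>l. bosonic_term q b m l - bosonic_term q b (m - 1) l - q powi (m - 1) * bosonic_term q b (m - 2) l"
  shows "t l + t (l + 1) = 0"
proof -
  obtain a where a: "m + b - 5 * l = 2 * a + 1"
    using \<open>odd (m + b - 5 * l)\<close> by (rule oddE)
  then have "(m + b - 5 * l) div 2 = a" "(m - 1 + b - 5 * l) div 2 = a" "(m - 2 + b - 5 * l) div 2 = a - 1"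
    "(m + b - 5 * (l + 1)) div 2 = a - 2" "(m - 1 + b - 5 * (l + 1)) div 2 = a - 3"
    "(m - 2 + b - 5 * (l + 1)) div 2 = a - 3"
    by presburger+
  note index = this
  define X where "X = qbinom_int q (m - 2) (a - 2)"
  have "t l = bosonic_coeff q b l * (q powi (m - a) * X)"
    unfolding t_def bosonic_term_def index X_def
    using qbinom_int_three_term[OF q \<open>2 \<le> m\<close>, of a] by (simp add: algebra_simps)
  moreover have "t (l + 1) = bosonic_coeff q b (l + 1) * (q powi (a - 2) * X)"
    unfolding t_def bosonic_term_def index X_def
    using qbinom_int_three_term'[OF q \<open>2 \<le> m\<close>, of "a - 2"] by (simp add: algebra_simps)
  moreover have "q powi (5 * l + 3 - b) * q powi (a - 2) = q powi (m - a)"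
  proof -
    have "m - a = (5 * l + 3 - b) + (a - 2)"
      using a by linarith
    then have "q powi (m - a) = q powi ((5 * l + 3 - b) + (a - 2))"
      by (simp only:)
    also have "\<dots> = q powi (5 * l + 3 - b) * q powi (a - 2)"
      by (rule power_int_add) (simp add: q(2))
    finally show ?thesis
      by (rule sym)
  qed
  ultimately show ?thesis
    by (simp add: bosonic_coeff_succ[OF q(2)] mult_ac)
qed

lemma bosonic_recurrence:
  assumes q: "norm q < 1" "q \<noteq> 0" and "2 \<le> m"
  shows "bosonic q b m = bosonic q b (m - 1) + q powi (m - 1) * bosonic q b (m - 2)"
proof -
  define t where "t l = bosonic_term q b m l + (- 1) * bosonic_term q b (m - 1) l
    + (- (q powi (m - 1))) * bosonic_term q b (m - 2) l" for l
  have "(bosonic_term q b k has_sum bosonic q b k) UNIV" for k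
    unfolding bosonic_def by (rule has_sum_infsum[OF bosonic_term_summable])
  then have t_sum: "(t has_sum bosonic q b m + (- 1) * bosonic q b (m - 1) + (- (q powi (m - 1))) * bosonic q b (m - 2)) UNIV"
    unfolding t_def by (intro has_sum_add has_sum_cmult_right)
  have "infsum t UNIV = 0"
  proof (rule infsum_eq_0_by_pairs)
    show "t summable_on UNIV"
      using t_sum by (rule has_sum_imp_summable)
    show "t l + t (l + 1) = 0" if "odd (m + b - 5 * l)" for l
      using bosonic_terms_cancel[OF q \<open>2 \<le> m\<close> that] by (simp add: t_def)
    show "odd (m + b - 5 * (l + 1)) \<longleftrightarrow> \<not> odd (m + b - 5 * l)" for l
      by presburger
  qed
  with infsumI[OF t_sum] have "bosonic q b m - bosonic q b (m - 1) - q powi (m - 1) * bosonic q b (m - 2) = 0"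
    by simp
  then show ?thesis
    by (simp add: algebra_simps)
qed

lemma bosonic_initial:
  assumes "0 \<le> m" "m \<le> b + 3" "m + b \<le> 4"
  shows "bosonic q b m = qbinom_int q m ((m + b) div 2)"
proof (rule bosonic_eq_single)
  fix l :: int
  assume "l \<noteq> 0"
  then consider "1 \<le> l" | "l \<le> -1"
    by linarith
  then have "(m + b - 5 * l) div 2 < 0 \<or> m < (m + b - 5 * l) div 2"
    using assms int_div_2_bounds[of "m + b - 5 * l"] by cases linarith+
  then show "bosonic_term q b m l = 0"
    by (simp add: bosonic_term_def qbinom_int_eq_0)
qed

lemma bosonic_initial_values:
  "bosonic q 0 0 = 1" "bosonic q 0 1 = 1" "bosonic q 2 1 = 1" "bosonic q 2 2 = 1"
  by (subst bosonic_initial; simp add: qbinom_int_0_right qbinom_int_self)+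

lemma fermionic_extend:
  assumes "n \<le> M"
  shows "fermionic q c n = (\<Sum>j\<le>M. q ^ (j\<^sup>2) * c ^ j * qbinom_int q (int n - int j) (int j))"
  unfolding fermionic_def
  by (rule sum.mono_neutral_left) (use assms in \<open>auto simp: qbinom_int_eq_0\<close>)

lemma fermionic_term_split:
  assumes q: "norm q < 1" "q \<noteq> 0" and "j \<le> Suc (Suc n)"
  shows "q ^ (j\<^sup>2) * c ^ j * qbinom_int q (int (Suc (Suc n)) - int j) (int j)
    = q ^ (j\<^sup>2) * c ^ j * qbinom_int q (int (Suc n) - int j) (int j)
      + (if j = 0 then 0 else c * q ^ Suc n * (q ^ ((j - 1)\<^sup>2) * c ^ (j - 1)
          * qbinom_int q (int n - int (j - 1)) (int (j - 1))))"
proof (cases "j = 0 \<or> j = Suc (Suc n)")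
  case True
  then show ?thesis
    by (auto simp: qbinom_int_eq_0 qbinom_int_0_right)
next
  case False
  then obtain i where j: "j = Suc i" "i \<le> n"
    using assms(3) by (metis Suc_le_mono le_SucE not0_implies_Suc)
  have "qbinom_int q (int (Suc (Suc n)) - int j) (int j)
      = qbinom_int q (int (Suc n) - int j) (int j) + q powi (int n - 2 * int i) * qbinom_int q (int n - int i) (int i)"
    using qbinom_int_pascal'[OF q(1), of "int (Suc (Suc n)) - int j" "int j"] j by (simp add: algebra_simps)
  moreover have "q ^ (j\<^sup>2) * q powi (int n - 2 * int i) = q * q ^ n * q ^ (i\<^sup>2)"
  proof -
    have "q ^ (j\<^sup>2) * q powi (int n - 2 * int i) = q powi (int (j\<^sup>2) + (int n - 2 * int i))"
      by (simp only: power_int_of_nat[symmetric], rule power_int_add[symmetric]) (simp add: q(2))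
    also have "int (j\<^sup>2) + (int n - 2 * int i) = int (Suc n + i\<^sup>2)"
      by (simp add: j power2_eq_square algebra_simps)
    also have "q powi int (Suc n + i\<^sup>2) = q * q ^ n * q ^ (i\<^sup>2)"
      by (simp only: power_int_of_nat power_add power_Suc)
    finally show ?thesis .
  qed
  ultimately show ?thesis
    using j by (simp add: algebra_simps)
qed

lemma fermionic_recurrence:
  assumes q: "norm q < 1" "q \<noteq> 0"
  shows "fermionic q c (Suc (Suc n)) = fermionic q c (Suc n) + c * q ^ Suc n * fermionic q c n"
proof -
  define f where "f k j = q ^ (j\<^sup>2) * c ^ j * qbinom_int q (int k - int j) (int j)" for k j
  have "fermionic q c (Suc (Suc n))
      = (\<Sum>j\<le>Suc (Suc n). f (Suc n) j + (if j = 0 then 0 else c * q ^ Suc n * f n (j - 1)))"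
    unfolding fermionic_def f_def by (rule sum.cong[OF refl], rule fermionic_term_split[OF q]) simp
  also have "\<dots> = (\<Sum>j\<le>Suc (Suc n). f (Suc n) j) + (\<Sum>j\<le>Suc (Suc n). if j = 0 then 0 else c * q ^ Suc n * f n (j - 1))"
    by (rule sum.distrib)
  also have "(\<Sum>j\<le>Suc (Suc n). f (Suc n) j) = fermionic q c (Suc n)"
    unfolding f_def by (rule fermionic_extend[symmetric]) simp
  also have "(\<Sum>j\<le>Suc (Suc n). if j = 0 then 0 else c * q ^ Suc n * f n (j - 1))
      = c * q ^ Suc n * (\<Sum>j\<le>Suc n. f n j)"
    by (simp add: sum.atMost_Suc_shift sum_distrib_left distrib_left del: sum.atMost_Suc)
  also have "(\<Sum>j\<le>Suc n. f n j) = fermionic q c n"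
    unfolding f_def by (rule fermionic_extend[symmetric]) simp
  finally show ?thesis .
qed

lemma second_order_recurrence_unique:
  fixes f g :: "nat \<Rightarrow> 'a::semiring"
  assumes "f 0 = g 0" "f 1 = g 1"
    and "\<And>n. f (Suc (Suc n)) = f (Suc n) + a n * f n" "\<And>n. g (Suc (Suc n)) = g (Suc n) + a n * g n"
  shows "f n = g n"
  by (induction n rule: induct_nat_012) (simp_all add: assms(1,3,4) assms(2)[unfolded One_nat_def])

theorem fermionic_eq_bosonic:
  assumes q: "norm q < 1" "q \<noteq> 0"
  shows "fermionic q 1 n = bosonic q 0 (int n)" and "fermionic q q n = bosonic q 2 (int n + 1)"
proof -
  have "q powi (int n + 1) = q ^ Suc n" "q powi (int n + 2) = q ^ Suc (Suc n)" for n
  proof -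
    have "int n + 1 = int (Suc n)" "int n + 2 = int (Suc (Suc n))"
      by simp_all
    then show "q powi (int n + 1) = q ^ Suc n" "q powi (int n + 2) = q ^ Suc (Suc n)"
      by (simp_all only: power_int_of_nat)
  qed
  then have bosonic_0: "bosonic q 0 (int (Suc (Suc n))) = bosonic q 0 (int (Suc n)) + q ^ Suc n * bosonic q 0 (int n)"
    and bosonic_2: "bosonic q 2 (int (Suc (Suc n)) + 1) = bosonic q 2 (int (Suc n) + 1) + q * q ^ Suc n * bosonic q 2 (int n + 1)"
    for n using bosonic_recurrence[OF q, of "int n + 2" 0] bosonic_recurrence[OF q, of "int n + 3" 2]
    by (simp_all add: algebra_simps)
  have fermionic_01: "fermionic q c 0 = 1" "fermionic q c (Suc 0) = 1" for c
    by (simp_all add: fermionic_def qbinom_int_0_right qbinom_int_eq_0)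
  show "fermionic q 1 n = bosonic q 0 (int n)"
  proof (rule second_order_recurrence_unique[where a = "\<lambda>n. q ^ Suc n"])
    show "fermionic q 1 0 = bosonic q 0 (int 0)" "fermionic q 1 1 = bosonic q 0 (int 1)"
      by (simp_all add: fermionic_01 bosonic_initial_values)
    show "fermionic q 1 (Suc (Suc n)) = fermionic q 1 (Suc n) + q ^ Suc n * fermionic q 1 n" for n
      using fermionic_recurrence[OF q, of 1 n] by simp
    show "bosonic q 0 (int (Suc (Suc n))) = bosonic q 0 (int (Suc n)) + q ^ Suc n * bosonic q 0 (int n)" for n
      by (rule bosonic_0)
  qed
  show "fermionic q q n = bosonic q 2 (int n + 1)"
  proof (rule second_order_recurrence_unique[where a = "\<lambda>n. q * q ^ Suc n"])
    show "fermionic q q 0 = bosonic q 2 (int 0 + 1)" "fermionic q q 1 = bosonic q 2 (int 1 + 1)"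
      by (simp_all add: fermionic_01 bosonic_initial_values)
    show "fermionic q q (Suc (Suc n)) = fermionic q q (Suc n) + q * q ^ Suc n * fermionic q q n" for n
      using fermionic_recurrence[OF q, of q n] by simp
    show "bosonic q 2 (int (Suc (Suc n)) + 1) = bosonic q 2 (int (Suc n) + 1) + q * q ^ Suc n * bosonic q 2 (int n + 1)"
      for n by (rule bosonic_2)
  qed
qed

lemma LIMSEQ_qbinom_int_half:
  assumes q: "norm q < 1"
  shows "(\<lambda>n. qbinom_int q (int n) ((int n + c) div 2)) \<longlonglongrightarrow> 1 / qpoch_inf q q"
proof -
  define a where "a n = nat ((int n + c) div 2)" for n
  have bounds: "\<forall>\<^sub>F n in sequentially. Z \<le> a n \<and> Z + a n \<le> n" for Z
  proof (rule eventually_sequentiallyI[of "nat (2 * int Z + \<bar>c\<bar> + 2)"])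
    fix n
    assume "nat (2 * int Z + \<bar>c\<bar> + 2) \<le> n"
    moreover have "2 * ((int n + c) div 2) \<le> int n + c" "int n + c \<le> 2 * ((int n + c) div 2) + 1"
      by (rule int_div_2_bounds)+
    ultimately show "Z \<le> a n \<and> Z + a n \<le> n"
      unfolding a_def by linarith
  qed
  have "(\<lambda>n. qbinom q n (a n)) \<longlonglongrightarrow> 1 / qpoch_inf q q"
  proof (rule LIMSEQ_qbinom[OF q])
    have "\<forall>\<^sub>F n in sequentially. Z \<le> a n" "\<forall>\<^sub>F n in sequentially. Z \<le> n - a n" for Z
      using bounds[of Z] by (eventually_elim, linarith)+
    then show "filterlim a at_top sequentially" "filterlim (\<lambda>n. n - a n) at_top sequentially"
      unfolding filterlim_at_top by blast+
    show "\<forall>\<^sub>F n in sequentially. a n \<le> n"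
      using bounds[of 0] by simp
  qed
  moreover have "\<forall>\<^sub>F n in sequentially. qbinom q n (a n) = qbinom_int q (int n) ((int n + c) div 2)"
    using bounds[of 1] by eventually_elim (auto simp: a_def qbinom_int_def)
  ultimately show ?thesis
    by (rule Lim_transform_eventually)
qed

lemma norm_bosonic_coeff:
  assumes "q \<noteq> 0"
  shows "norm (bosonic_coeff q b l) = (norm q ^ 5) powi choose2 l * (norm q powi (3 - b)) powi l"
proof -
  have "norm (bosonic_coeff q b l) = norm q powi (5 * choose2 l) * norm q powi ((3 - b) * l)"
    using assms by (simp add: bosonic_coeff_def norm_mult norm_power_int power_int_add)
  also have "\<dots> = (norm q powi 5) powi choose2 l * (norm q powi (3 - b)) powi l"
    by (simp only: power_int_mult)
  finally show ?thesis
    by simp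
qed

lemma summable_norm_bosonic_coeff:
  assumes "norm q < 1" "q \<noteq> 0"
  shows "(\<lambda>l. norm (bosonic_coeff q b l)) summable_on UNIV"
  using summable_theta[of "norm q ^ 5" "norm q powi (3 - b)"] assms
  by (simp add: norm_bosonic_coeff power_less_one_iff)

theorem LIMSEQ_bosonic:
  assumes q: "norm q < 1" "q \<noteq> 0"
  shows "(\<lambda>n. bosonic q b (int n)) \<longlonglongrightarrow> infsum (bosonic_coeff q b) UNIV / qpoch_inf q q"
proof -
  have "(\<lambda>n. infsum (bosonic_term q b (int n)) UNIV)
      \<longlonglongrightarrow> infsum (\<lambda>l. bosonic_coeff q b l * (1 / qpoch_inf q q)) UNIV"
  proof (rule tannery_infsum(2))
    show "(\<lambda>l. norm (bosonic_coeff q b l) * (1 / rqpoch_inf (norm q))) summable_on UNIV"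
      using summable_norm_bosonic_coeff[OF q] by (rule summable_on_cmult_left)
    show "norm (bosonic_term q b (int n) l) \<le> norm (bosonic_coeff q b l) * (1 / rqpoch_inf (norm q))"
      for n l
      using mult_left_mono[OF norm_qbinom_int_le[OF q(1)], of "norm (bosonic_coeff q b l)"]
      by (simp add: bosonic_term_def norm_mult)
    show "(\<lambda>n. bosonic_term q b (int n) l) \<longlonglongrightarrow> bosonic_coeff q b l * (1 / qpoch_inf q q)" for l
      using tendsto_mult_left[OF LIMSEQ_qbinom_int_half[OF q(1), of "b - 5 * l"], of "bosonic_coeff q b l"]
      by (simp add: bosonic_term_def algebra_simps)
  qed
  then show ?thesis
    using infsum_cmult_left'[where f = "bosonic_coeff q b" and A = UNIV and c = "1 / qpoch_inf q q"] by (simp add: bosonic_def)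
qed

lemma fermionic_has_sum:
  assumes q: "norm q < 1" and c: "norm c \<le> 1" and lim: "(\<lambda>n. fermionic q c n) \<longlonglongrightarrow> L"
  shows "((\<lambda>j. q ^ (j\<^sup>2) * c ^ j / qpoch q q j) has_sum L) UNIV"
proof (rule tannery_has_sum)
  define f where "f n j = q ^ (j\<^sup>2) * c ^ j * qbinom_int q (int n - int j) (int j)" for n j
  show "(\<lambda>j. norm q ^ j * (1 / rqpoch_inf (norm q))) summable_on UNIV"
    using q rqpoch_inf_pos[of "norm q"]
    by (intro summable_nonneg_imp_summable_on summable_mult2 summable_geometric) auto
  show "norm (f n j) \<le> norm q ^ j * (1 / rqpoch_inf (norm q))" for n j
  proof -
    have "norm q ^ (j\<^sup>2) \<le> norm q ^ j"
      using q by (intro power_decreasing) (auto simp: power2_eq_square)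
    moreover have "norm c ^ j \<le> 1"
      using c by (simp add: power_le_one)
    ultimately have "norm q ^ (j\<^sup>2) * norm c ^ j \<le> norm q ^ j"
      using mult_mono[of "norm q ^ (j\<^sup>2)" "norm q ^ j" "norm c ^ j" 1] by simp
    then show ?thesis
      unfolding f_def norm_mult norm_power
      by (rule mult_mono[OF _ norm_qbinom_int_le[OF q]]) simp_all
  qed
  show "(\<lambda>n. f n j) \<longlonglongrightarrow> q ^ (j\<^sup>2) * c ^ j / qpoch q q j" for j
  proof (rule Lim_transform_eventually)
    show "(\<lambda>n. q ^ (j\<^sup>2) * c ^ j * qbinom q (n - j) j) \<longlonglongrightarrow> q ^ (j\<^sup>2) * c ^ j / qpoch q q j"
      using tendsto_mult_left[OF filterlim_compose[OF LIMSEQ_qbinom_fixed[OF q] filterlim_minus_const_nat_at_top]]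
      by simp
    show "\<forall>\<^sub>F n in sequentially. q ^ (j\<^sup>2) * c ^ j * qbinom q (n - j) j = f n j"
      using eventually_ge_at_top[of j]
    proof eventually_elim
      case (elim n)
      then have "int n - int j = int (n - j)"
        by simp
      then show ?case
        by (simp only: f_def qbinom_int_of_nat)
    qed
  qed
  have "infsum (f n) UNIV = fermionic q c n" for n
    unfolding fermionic_def f_def by (rule infsum_eq_sum_atMost) (simp add: qbinom_int_eq_0)
  with lim show "(\<lambda>n. infsum (f n) UNIV) \<longlonglongrightarrow> L"
    by simp
qed

lemma qpoch_self_mult_5:
  "qpoch q q (5 * N) = qpoch q (q ^ 5) N * qpoch (q ^ 2) (q ^ 5) N * qpoch (q ^ 3) (q ^ 5) N
    * qpoch (q ^ 4) (q ^ 5) N * qpoch (q ^ 5) (q ^ 5) N"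
proof (induction N)
  case 0
  then show ?case by simp
next
  case (Suc N)
  have "5 * Suc N = 5 * N + 5"
    by simp
  then have "qpoch q q (5 * Suc N) = qpoch q q (5 * N) * qpoch (q * (q ^ 5) ^ N) q 5"
    by (simp only: qpoch_add power_mult)
  also have "qpoch (q * (q ^ 5) ^ N) q 5 = (1 - q * (q ^ 5) ^ N) * (1 - q ^ 2 * (q ^ 5) ^ N)
      * (1 - q ^ 3 * (q ^ 5) ^ N) * (1 - q ^ 4 * (q ^ 5) ^ N) * (1 - q ^ 5 * (q ^ 5) ^ N)"
    by (simp add: qpoch_def numeral_eq_Suc lessThan_Suc algebra_simps)
  finally show ?case
    using Suc by (simp add: qpoch_Suc mult_ac)
qed

lemma qpoch_inf_self_residues:
  assumes q: "norm q < 1"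
  shows "qpoch_inf q q = qpoch_inf q (q ^ 5) * qpoch_inf (q ^ 2) (q ^ 5) * qpoch_inf (q ^ 3) (q ^ 5)
    * qpoch_inf (q ^ 4) (q ^ 5) * qpoch_inf (q ^ 5) (q ^ 5)"
proof (rule LIMSEQ_unique)
  have "strict_mono (\<lambda>N::nat. 5 * N)"
    by (auto simp: strict_mono_def)
  then show "(\<lambda>N. qpoch q q (5 * N)) \<longlonglongrightarrow> qpoch_inf q q"
    using LIMSEQ_subseq_LIMSEQ[OF LIMSEQ_qpoch[OF q]] by (simp add: o_def)
  have "norm (q ^ 5) < 1"
    using q by (simp add: norm_power power_less_one_iff)
  then show "(\<lambda>N. qpoch q q (5 * N)) \<longlonglongrightarrow> qpoch_inf q (q ^ 5) * qpoch_inf (q ^ 2) (q ^ 5)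
      * qpoch_inf (q ^ 3) (q ^ 5) * qpoch_inf (q ^ 4) (q ^ 5) * qpoch_inf (q ^ 5) (q ^ 5)"
    unfolding qpoch_self_mult_5 by (intro tendsto_mult LIMSEQ_qpoch)
qed

lemma bosonic_coeff_has_sum:
  assumes q: "norm q < 1" "q \<noteq> 0" and "r < 5"
  shows "(bosonic_coeff q (3 - int r)
    has_sum qpoch_inf (q ^ r) (q ^ 5) * qpoch_inf (q ^ (5 - r)) (q ^ 5) * qpoch_inf (q ^ 5) (q ^ 5)) UNIV"
proof -
  have "q powi (5 * choose2 k + int r * k) = (q powi 5) powi choose2 k * (q powi int r) powi k" for k
    by (subst power_int_add) (simp_all add: q(2) power_int_mult)
  then have coeff: "bosonic_coeff q (3 - int r) = (\<lambda>k. (-1) powi k * (q ^ 5) powi choose2 k * (q ^ r) powi k)"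
    by (simp add: bosonic_coeff_def fun_eq_iff)
  have quotient: "q ^ 5 / q ^ r = q ^ (5 - r)"
    using q(2) \<open>r < 5\<close> by (simp add: power_diff)
  have "((\<lambda>k. (-1) powi k * (q ^ 5) powi choose2 k * (q ^ r) powi k)
      has_sum qpoch_inf (q ^ r) (q ^ 5) * qpoch_inf (q ^ 5 / q ^ r) (q ^ 5) * qpoch_inf (q ^ 5) (q ^ 5)) UNIV"
    by (rule jacobi_triple_product)
       (use q \<open>r < 5\<close> in \<open>simp_all add: norm_power power_less_one_iff power_strict_decreasing\<close>)
  then show ?thesis
    by (simp only: coeff quotient)
qed

theorem rogers_ramanujan:
  assumes q: "norm q < 1" "q \<noteq> 0"
  shows "((\<lambda>j. q ^ (j\<^sup>2) / qpoch q q j) has_sum 1 / (qpoch_inf q (q ^ 5) * qpoch_inf (q ^ 4) (q ^ 5))) UNIV"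
    and "((\<lambda>j. q ^ (j\<^sup>2) * q ^ j / qpoch q q j)
      has_sum 1 / (qpoch_inf (q ^ 2) (q ^ 5) * qpoch_inf (q ^ 3) (q ^ 5))) UNIV"
proof -
  have nonzero: "qpoch_inf (q ^ k) (q ^ 5) \<noteq> 0" if "0 < k" for k
    using q that by (intro qpoch_inf_nonzero) (simp_all add: norm_power power_less_one_iff)
  have "infsum (bosonic_coeff q 0) UNIV / qpoch_inf q q = 1 / (qpoch_inf q (q ^ 5) * qpoch_inf (q ^ 4) (q ^ 5))"
    using infsumI[OF bosonic_coeff_has_sum[OF q, of 3]] nonzero[of 1] nonzero[of 2] nonzero[of 3] nonzero[of 4] nonzero[of 5]
    by (simp add: qpoch_inf_self_residues[OF q(1)])
  moreover have "(\<lambda>n. fermionic q 1 n) \<longlonglongrightarrow> infsum (bosonic_coeff q 0) UNIV / qpoch_inf q q"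
    unfolding fermionic_eq_bosonic[OF q] by (rule LIMSEQ_bosonic[OF q])
  ultimately show "((\<lambda>j. q ^ (j\<^sup>2) / qpoch q q j) has_sum 1 / (qpoch_inf q (q ^ 5) * qpoch_inf (q ^ 4) (q ^ 5))) UNIV"
    using fermionic_has_sum[OF q(1), of 1] by simp
  have "infsum (bosonic_coeff q 2) UNIV / qpoch_inf q q = 1 / (qpoch_inf (q ^ 2) (q ^ 5) * qpoch_inf (q ^ 3) (q ^ 5))"
    using infsumI[OF bosonic_coeff_has_sum[OF q, of 1]] nonzero[of 1] nonzero[of 2] nonzero[of 3] nonzero[of 4] nonzero[of 5]
    by (simp add: qpoch_inf_self_residues[OF q(1)])
  moreover have "(\<lambda>n. fermionic q q n) \<longlonglongrightarrow> infsum (bosonic_coeff q 2) UNIV / qpoch_inf q q"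
    unfolding fermionic_eq_bosonic[OF q] using LIMSEQ_Suc[OF LIMSEQ_bosonic[OF q, of 2]]
    by (simp add: add.commute)
  ultimately show "((\<lambda>j. q ^ (j\<^sup>2) * q ^ j / qpoch q q j)
      has_sum 1 / (qpoch_inf (q ^ 2) (q ^ 5) * qpoch_inf (q ^ 3) (q ^ 5))) UNIV"
    using fermionic_has_sum[OF q(1), of q] q(1) by simp
qed

section \<open>The triple sum\<close>

lemma qpoch_square_square: "qpoch (q\<^sup>2) (q\<^sup>2) n = qpoch q q n * qpoch (-q) q n"
  by (induction n) (simp_all add: qpoch_Suc power_mult_distrib algebra_simps mult_2_right flip: power_mult power_add)

lemma qpoch_square_square_nonzero: "norm q < 1 \<Longrightarrow> qpoch (q\<^sup>2) (q\<^sup>2) n \<noteq> 0"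
  by (rule qpoch_nonzero) (simp_all add: norm_power power_less_one_iff power_le_one)

definition euler_coeff :: "complex \<Rightarrow> int \<Rightarrow> complex" where
  "euler_coeff q j = (if j < 0 then 0 else q ^ (nat j choose 2) / qpoch q q (nat j))"

text \<open>
  The coefficient of \<open>z\<^sup>n\<close> in \<open>(-z;q)\<^sub>\<infinity> / (z\<^sup>2;q\<^sup>2)\<^sub>\<infinity> = 1 / (z;q)\<^sub>\<infinity>\<close>; the identity
  \<open>conv_coeff q n = 1 / (q;q)\<^sub>n\<close> is proved through the recurrence it satisfies.
\<close>

definition conv_coeff :: "complex \<Rightarrow> nat \<Rightarrow> complex" where
  "conv_coeff q n = (\<Sum>i\<le>n. euler_coeff q (int n - 2 * int i) / qpoch (q\<^sup>2) (q\<^sup>2) i)"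

lemma euler_coeff_recurrence:
  assumes q: "norm q < 1" "q \<noteq> 0"
  shows "euler_coeff q j * (1 - q powi j) = q powi (j - 1) * euler_coeff q (j - 1)"
proof (cases "j \<le> 0")
  case True
  then show ?thesis
    by (cases "j = 0") (auto simp: euler_coeff_def)
next
  case False
  define m where "m = nat (j - 1)"
  with False have j: "j = int (Suc m)" "j - 1 = int m"
    by simp_all
  have "qpoch q q m \<noteq> 0" "1 - q ^ Suc m \<noteq> 0"
    using qpoch_self_nonzero[OF q(1), of m] qpoch_self_nonzero[OF q(1), of "Suc m"]
    by (auto simp: qpoch_self_Suc)
  then have "q ^ (Suc m choose 2) / qpoch q q (Suc m) * (1 - q ^ Suc m) = q ^ m * (q ^ (m choose 2) / qpoch q q m)"
    by (simp add: qpoch_self_Suc Suc_choose_two power_add field_simps)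
  then show ?thesis
    unfolding euler_coeff_def j by (simp only: power_int_of_nat nat_int) simp
qed

lemma conv_coeff_extend:
  assumes "n \<le> M"
  shows "conv_coeff q n = (\<Sum>i\<le>M. euler_coeff q (int n - 2 * int i) / qpoch (q\<^sup>2) (q\<^sup>2) i)"
  unfolding conv_coeff_def
  by (rule sum.mono_neutral_left) (use assms in \<open>auto simp: euler_coeff_def\<close>)

lemma power_mult_power_int:
  assumes "(q::complex) \<noteq> 0" "int m + k = int n"
  shows "q ^ m * q powi k = q ^ n"
  using assms by (simp flip: power_int_add power_int_of_nat)

lemma conv_coeff_recurrence:
  assumes q: "norm q < 1" "q \<noteq> 0"
  shows "(1 - q ^ Suc (Suc n)) * conv_coeff q (Suc (Suc n)) = conv_coeff q n + q ^ Suc n * conv_coeff q (Suc n)"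
proof -
  define N where "N = Suc (Suc n)"
  define t where "t i = euler_coeff q (int N - 2 * int i) / qpoch (q\<^sup>2) (q\<^sup>2) i" for i
  have "(1 - q ^ N) * t i = t i * (1 - q ^ (2 * i)) + q ^ (2 * i) * (t i * (1 - q powi (int N - 2 * int i)))"
    for i using power_mult_power_int[OF q(2), of "2 * i" "int N - 2 * int i" N] by (simp add: algebra_simps)
  then have "(1 - q ^ N) * conv_coeff q N
      = (\<Sum>i\<le>N. t i * (1 - q ^ (2 * i))) + (\<Sum>i\<le>N. q ^ (2 * i) * (t i * (1 - q powi (int N - 2 * int i))))"
    by (simp add: conv_coeff_def t_def[symmetric] sum_distrib_left sum.distrib)
  also have "(\<Sum>i\<le>N. t i * (1 - q ^ (2 * i))) = (\<Sum>i\<le>Suc n. euler_coeff q (int n - 2 * int i) / qpoch (q\<^sup>2) (q\<^sup>2) i)"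
  proof -
    have "t (Suc i) * (1 - q ^ (2 * Suc i)) = euler_coeff q (int n - 2 * int i) / qpoch (q\<^sup>2) (q\<^sup>2) i" for i
    proof -
      have "qpoch (q\<^sup>2) (q\<^sup>2) (Suc i) = qpoch (q\<^sup>2) (q\<^sup>2) i * (1 - q ^ (2 * Suc i))"
        by (simp only: qpoch_Suc power_mult power_Suc)
      moreover have "int N - 2 * int (Suc i) = int n - 2 * int i"
        by (simp add: N_def)
      ultimately have "t (Suc i) * (1 - q ^ (2 * Suc i))
          = euler_coeff q (int n - 2 * int i) / (qpoch (q\<^sup>2) (q\<^sup>2) i * (1 - q ^ (2 * Suc i))) * (1 - q ^ (2 * Suc i))"
        by (simp only: t_def)
      moreover have "qpoch (q\<^sup>2) (q\<^sup>2) i * (1 - q ^ (2 * Suc i)) \<noteq> 0"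
        using qpoch_square_square_nonzero[OF q(1), of "Suc i"] \<open>qpoch (q\<^sup>2) (q\<^sup>2) (Suc i) = _\<close> by simp
      ultimately show ?thesis
        by simp
    qed
    then show ?thesis
      unfolding N_def by (simp only: sum.atMost_Suc_shift) simp
  qed
  also have "\<dots> = conv_coeff q n"
    by (rule conv_coeff_extend[symmetric]) simp
  also have "(\<Sum>i\<le>N. q ^ (2 * i) * (t i * (1 - q powi (int N - 2 * int i))))
      = q ^ Suc n * (\<Sum>i\<le>N. euler_coeff q (int (Suc n) - 2 * int i) / qpoch (q\<^sup>2) (q\<^sup>2) i)"
  proof -
    have "q ^ (2 * i) * (t i * (1 - q powi (int N - 2 * int i)))
        = q ^ Suc n * (euler_coeff q (int (Suc n) - 2 * int i) / qpoch (q\<^sup>2) (q\<^sup>2) i)" for i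
    proof -
      have J: "int N - 2 * int i - 1 = int (Suc n) - 2 * int i"
        by (simp add: N_def)
      have "q ^ (2 * i) * (t i * (1 - q powi (int N - 2 * int i)))
          = q ^ (2 * i) * (q powi (int (Suc n) - 2 * int i) * euler_coeff q (int (Suc n) - 2 * int i) / qpoch (q\<^sup>2) (q\<^sup>2) i)"
        by (simp only: t_def times_divide_eq_left euler_coeff_recurrence[OF q] J)
      also have "\<dots> = (q ^ (2 * i) * q powi (int (Suc n) - 2 * int i)) * (euler_coeff q (int (Suc n) - 2 * int i) / qpoch (q\<^sup>2) (q\<^sup>2) i)"
        by (simp only: mult.assoc times_divide_eq_right)
      also have "q ^ (2 * i) * q powi (int (Suc n) - 2 * int i) = q ^ Suc n"
        by (rule power_mult_power_int[OF q(2)]) simp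
      finally show ?thesis .
    qed
    then show ?thesis
      by (simp add: sum_distrib_left)
  qed
  also have "(\<Sum>i\<le>N. euler_coeff q (int (Suc n) - 2 * int i) / qpoch (q\<^sup>2) (q\<^sup>2) i) = conv_coeff q (Suc n)"
    by (rule conv_coeff_extend[symmetric]) (simp add: N_def)
  finally show ?thesis
    by (simp add: N_def)
qed

theorem conv_coeff_eq:
  assumes q: "norm q < 1" "q \<noteq> 0"
  shows "conv_coeff q n = 1 / qpoch q q n"
proof -
  have "1 - q \<noteq> 0"
    using q by auto
  have step: "(1 - q ^ Suc n) * conv_coeff q (Suc n) = conv_coeff q n" for n
  proof (induction n)
    case 0
    then show ?case
      using \<open>1 - q \<noteq> 0\<close> by (simp add: conv_coeff_def euler_coeff_def binomial_eq_0 qpoch_Suc)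
  next
    case (Suc n)
    have "(1 - q ^ Suc (Suc n)) * conv_coeff q (Suc (Suc n)) = conv_coeff q n + q ^ Suc n * conv_coeff q (Suc n)"
      by (rule conv_coeff_recurrence[OF q])
    also have "\<dots> = conv_coeff q (Suc n)"
      unfolding Suc.IH[symmetric] by (simp add: algebra_simps)
    finally show ?case .
  qed
  show ?thesis
  proof (induction n)
    case 0
    then show ?case
      by (simp add: conv_coeff_def euler_coeff_def binomial_eq_0)
  next
    case (Suc n)
    have "1 - q ^ Suc n \<noteq> 0"
      using qpoch_self_nonzero[OF q(1), of "Suc n"] by (auto simp: qpoch_self_Suc)
    then have "conv_coeff q (Suc n) = (1 - q ^ Suc n) * conv_coeff q (Suc n) / (1 - q ^ Suc n)"
      by simp
    also have "\<dots> = 1 / qpoch q q (Suc n)"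
      by (simp only: step Suc.IH qpoch_self_Suc divide_divide_eq_left)
    finally show ?case .
  qed
qed

lemma summable_on_triple_geometric:
  fixes f :: "nat \<times> nat \<times> nat \<Rightarrow> complex" and r :: real
  assumes r: "0 \<le> r" "r < 1" and bound: "\<And>i j k. norm (f (i, j, k)) \<le> C * r ^ (i + j + k)"
  shows "f summable_on UNIV"
proof -
  have geometric: "(\<lambda>i. norm (r ^ i)) summable_on UNIV"
    using r by (intro summable_nonneg_imp_summable_on) (simp_all add: power_abs summable_geometric)
  have "(\<lambda>(j, k). r ^ j * r ^ k) summable_on UNIV \<times> UNIV"
    by (rule summable_on_mult_product(2)[OF _ _ geometric geometric]) simp_all
  then have pairs: "(\<lambda>jk. norm ((\<lambda>(j, k). r ^ j * r ^ k) jk)) summable_on UNIV \<times> UNIV"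
    using r by (simp add: case_prod_unfold abs_mult power_abs)
  have "(\<lambda>(i, jk). r ^ i * (\<lambda>(j, k). r ^ j * r ^ k) jk) summable_on UNIV \<times> (UNIV \<times> UNIV)"
    by (rule summable_on_mult_product(2)[OF _ _ geometric pairs]) simp_all
  then have "(\<lambda>(i, j, k). C * r ^ (i + j + k)) summable_on UNIV"
    by (auto simp: power_add case_prod_unfold mult.assoc intro: summable_on_cmult_right)
  then have "(\<lambda>x. norm (f x)) summable_on UNIV"
    by (rule summable_on_comparison_test) (auto simp: bound)
  then show ?thesis
    by (rule abs_summable_summable)
qed

lemma euler_shifted_has_sum:
  assumes q: "norm q < 1"
  shows "((\<lambda>k. q ^ (i * k + (Suc k choose 2)) / qpoch q q k) has_sum qpoch_inf (-q) q / qpoch (-q) q i) UNIV"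
proof -
  have "q ^ (k choose 2) * (q * q ^ i) ^ k = q ^ (i * k + (Suc k choose 2))" for k
    by (simp add: Suc_choose_two power_add power_mult_distrib mult_ac flip: power_mult)
  moreover have "qpoch_inf (- (q * q ^ i)) q = qpoch_inf (-q) q / qpoch (-q) q i"
    using qpoch_inf_split[OF q, of "-q" i] qpoch_nonzero[of "-q" q i] q by (simp add: field_simps)
  ultimately show ?thesis
    using euler_qpoch_inf[OF q, of "q * q ^ i"] by simp
qed

lemma conv_coeff_half:
  "conv_coeff q n = (\<Sum>i\<le>n div 2. q ^ ((n - 2 * i) choose 2) / (qpoch q q (n - 2 * i) * qpoch (q\<^sup>2) (q\<^sup>2) i))"
proof -
  have "conv_coeff q n = (\<Sum>i\<le>n div 2. euler_coeff q (int n - 2 * int i) / qpoch (q\<^sup>2) (q\<^sup>2) i)"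
    unfolding conv_coeff_def
  proof (rule sum.mono_neutral_right)
    show "\<forall>i\<in>{..n} - {..n div 2}. euler_coeff q (int n - 2 * int i) / qpoch (q\<^sup>2) (q\<^sup>2) i = 0"
    proof
      fix i assume "i \<in> {..n} - {..n div 2}"
      then have "n < i * 2"
        using div_less_iff_less_mult[of 2 n i] by simp
      then have "int n - 2 * int i < 0"
        by linarith
      then show "euler_coeff q (int n - 2 * int i) / qpoch (q\<^sup>2) (q\<^sup>2) i = 0"
        by (simp add: euler_coeff_def)
    qed
  qed auto
  also have "\<dots> = (\<Sum>i\<le>n div 2. q ^ ((n - 2 * i) choose 2) / (qpoch q q (n - 2 * i) * qpoch (q\<^sup>2) (q\<^sup>2) i))"
  proof (rule sum.cong)
    fix i assume "i \<in> {..n div 2}"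
    then have "\<not> n < i * 2"
      using div_less_iff_less_mult[of 2 n i] by simp
    then have "int n - 2 * int i = int (n - 2 * i)"
      by linarith
    then show "euler_coeff q (int n - 2 * int i) / qpoch (q\<^sup>2) (q\<^sup>2) i
        = q ^ ((n - 2 * i) choose 2) / (qpoch q q (n - 2 * i) * qpoch (q\<^sup>2) (q\<^sup>2) i)"
      by (simp only: euler_coeff_def nat_int of_nat_less_0_iff if_False divide_divide_eq_left)
  qed simp
  finally show ?thesis .
qed

lemma pairs_has_sum:
  assumes q: "norm q < 1" "q \<noteq> 0"
    and RR: "((\<lambda>n. q ^ (n\<^sup>2) * q ^ (s * n) / qpoch q q n) has_sum R) UNIV"
  defines "G \<equiv> \<lambda>(i, j). q ^ ((2 * i + j)\<^sup>2 + s * (2 * i + j) + (j choose 2)) / (qpoch q q j * qpoch (q\<^sup>2) (q\<^sup>2) i)"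
  assumes "G summable_on UNIV"
  shows "(G has_sum R) UNIV"
proof -
  define S where "S = Sigma (UNIV :: nat set) (\<lambda>n. {..n div 2})"
  have reindex: "((\<lambda>(n, i). G (i, n - 2 * i)) has_sum x) S \<longleftrightarrow> (G has_sum x) UNIV" for x
    unfolding S_def
    by (rule has_sum_reindex_bij_witness[where j = "\<lambda>(n, i). (i, n - 2 * i)" and i = "\<lambda>(i, j). (2 * i + j, i)"])
       auto
  have "(\<Sum>i\<le>n div 2. G (i, n - 2 * i)) = q ^ (n\<^sup>2) * q ^ (s * n) * conv_coeff q n" for n
    unfolding conv_coeff_half sum_distrib_left
  proof (rule sum.cong)
    fix i assume "i \<in> {..n div 2}"
    then have "2 * i + (n - 2 * i) = n"
      using div_less_iff_less_mult[of 2 n i] by simp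
    then show "G (i, n - 2 * i)
        = q ^ (n\<^sup>2) * q ^ (s * n) * (q ^ ((n - 2 * i) choose 2) / (qpoch q q (n - 2 * i) * qpoch (q\<^sup>2) (q\<^sup>2) i))"
      by (simp add: G_def power_add)
  qed simp
  then have inner: "((\<lambda>i. (\<lambda>(n, i). G (i, n - 2 * i)) (n, i)) has_sum q ^ (n\<^sup>2) * q ^ (s * n) / qpoch q q n) {..n div 2}" for n
    using has_sum_finite[of "{..n div 2}" "\<lambda>i. G (i, n - 2 * i)"] by (simp add: conv_coeff_eq[OF q])
  have "(\<lambda>(n, i). G (i, n - 2 * i)) summable_on S"
    using \<open>G summable_on UNIV\<close> reindex by (auto simp: summable_on_def)
  then have "((\<lambda>(n, i). G (i, n - 2 * i)) has_sum R) S"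
    unfolding S_def by (rule has_sum_SigmaI[OF inner RR])
  then show ?thesis
    using reindex by blast
qed

lemma triple_has_sum:
  assumes q: "norm q < 1" "q \<noteq> 0"
    and RR: "((\<lambda>n. q ^ (n\<^sup>2) * q ^ (s * n) / qpoch q q n) has_sum R) UNIV"
  shows "((\<lambda>(i, j, k). q ^ ((2 * i + j)\<^sup>2 + s * (2 * i + j) + (j choose 2) + i * k + (Suc k choose 2))
      / (qpoch q q i * qpoch q q j * qpoch q q k)) has_sum qpoch_inf (-q) q * R) UNIV"
    (is "(?f has_sum _) UNIV")
proof -
  define E where "E i j = (2 * i + j)\<^sup>2 + s * (2 * i + j) + (j choose 2)" for i j
  define f where "f = (\<lambda>((i, j), k). ?f (i, j, k))"
  define G where "G = (\<lambda>(i, j). q ^ E i j / (qpoch q q j * qpoch (q\<^sup>2) (q\<^sup>2) i))"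
  have reindex: "(f has_sum x) UNIV \<longleftrightarrow> (?f has_sum x) UNIV" for x
    by (rule has_sum_reindex_bij_witness[where j = "\<lambda>((i, j), k). (i, j, k)" and i = "\<lambda>(i, j, k). ((i, j), k)"])
       (auto simp: f_def)
  have "?f summable_on UNIV"
  proof (rule summable_on_triple_geometric)
    let ?K = "1 / rqpoch_inf (norm q)"
    show "norm (?f (i, j, k)) \<le> ?K ^ 3 * norm q ^ (i + j + k)" for i j k
    proof -
      have "i + j \<le> (2 * i + j)\<^sup>2"
        using le_square[of "2 * i + j"] unfolding power2_eq_square by linarith
      moreover have "k \<le> Suc k choose 2"
        by (simp add: Suc_choose_two)
      ultimately have power_le: "norm q ^ ((2 * i + j)\<^sup>2 + s * (2 * i + j) + (j choose 2) + i * k + (Suc k choose 2))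
          \<le> norm q ^ (i + j + k)"
        using q by (intro power_decreasing) auto
      have inverse_le: "norm (1 / qpoch q q n) \<le> ?K" for n
        by (rule norm_inverse_qpoch_le[OF q(1)])
      have "norm (?f (i, j, k)) = norm q ^ ((2 * i + j)\<^sup>2 + s * (2 * i + j) + (j choose 2) + i * k + (Suc k choose 2))
          * (norm (1 / qpoch q q i) * norm (1 / qpoch q q j) * norm (1 / qpoch q q k))"
        by (simp add: norm_divide norm_mult norm_power)
      also have "\<dots> \<le> norm q ^ (i + j + k) * (?K * ?K * ?K)"
        by (rule mult_mono[OF power_le mult_mono'[OF mult_mono'[OF inverse_le inverse_le] inverse_le]]) simp_all
      finally show ?thesis
        by (simp add: power3_eq_cube mult_ac)
    qed
  qed (use q in simp_all)
  then have "f summable_on UNIV"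
    using reindex by (auto simp: summable_on_def)
  have inner_ij: "((\<lambda>k. f ((i, j), k)) has_sum qpoch_inf (-q) q * G (i, j)) UNIV" for i j
  proof -
    have "qpoch (-q) q i \<noteq> 0"
      using q by (intro qpoch_nonzero) auto
    then have "q ^ E i j / (qpoch q q i * qpoch q q j) * (qpoch_inf (-q) q / qpoch (-q) q i) = qpoch_inf (-q) q * G (i, j)"
      by (simp add: G_def qpoch_square_square mult_ac)
    then show ?thesis
      using has_sum_cmult_right[OF euler_shifted_has_sum[OF q(1), of i], of "q ^ E i j / (qpoch q q i * qpoch q q j)"]
      by (simp add: f_def E_def power_add mult_ac)
  qed
  have inner: "((\<lambda>k. f (x, k)) has_sum qpoch_inf (-q) q * G x) UNIV" for x
    using inner_ij[of "fst x" "snd x"] by simp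
  have "(\<lambda>x. infsum (\<lambda>y. f (x, y)) UNIV) summable_on UNIV"
    by (rule summable_on_SigmaD[where B = "\<lambda>_. UNIV"])
       (use \<open>f summable_on UNIV\<close> inner in \<open>auto intro: has_sum_imp_summable\<close>)
  moreover have "infsum (\<lambda>y. f (x, y)) UNIV = qpoch_inf (-q) q * G x" for x
    using infsumI[OF inner] by simp
  ultimately have "(\<lambda>x. qpoch_inf (-q) q * G x) summable_on UNIV"
    by simp
  moreover have "qpoch_inf (-q) q \<noteq> 0"
    using q by (intro qpoch_inf_nonzero) auto
  ultimately have "G summable_on UNIV"
    using summable_on_cmult_right'[of "qpoch_inf (-q) q" G UNIV] by simp
  then have "(G has_sum R) UNIV"
    unfolding G_def E_def by (rule pairs_has_sum[OF q RR])
  have "(f has_sum qpoch_inf (-q) q * R) (UNIV \<times> UNIV)"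
    by (rule has_sum_SigmaI[OF inner has_sum_cmult_right[OF \<open>(G has_sum R) UNIV\<close>]])
       (use \<open>f summable_on UNIV\<close> in simp)
  then show ?thesis
    using reindex[of "qpoch_inf (-q) q * R"] by simp
qed

lemma choose_two_double: "2 * (n choose 2) + n = n\<^sup>2"
  by (induction n) (simp_all add: Suc_choose_two binomial_eq_0 power2_eq_square)

lemma exponent_minus: "(3 * j\<^sup>2 - j) div 2 = j\<^sup>2 + (j choose 2)"
proof -
  have "3 * j\<^sup>2 - j = 2 * (j\<^sup>2 + (j choose 2))"
    unfolding choose_two_double[of j, symmetric] by simp
  then show ?thesis
    by simp
qed

lemma exponent_plus: "(3 * j\<^sup>2 + j) div 2 = j\<^sup>2 + j + (j choose 2)"
proof -
  have "3 * j\<^sup>2 + j = 2 * (j\<^sup>2 + j + (j choose 2))"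
    unfolding choose_two_double[of j, symmetric] by simp
  then show ?thesis
    by simp
qed

lemma exponent_k: "(k\<^sup>2 + k) div 2 = Suc k choose 2"
proof -
  have "k\<^sup>2 + k = 2 * (Suc k choose 2)"
    using choose_two_double[of k] by (simp add: Suc_choose_two)
  then show ?thesis
    by simp
qed

lemma has_sum_zero_power_triple:
  assumes "\<And>i j k. e i j k = 0 \<longleftrightarrow> i = 0 \<and> j = 0 \<and> k = 0"
  shows "((\<lambda>(i, j, k). (0::complex) ^ e i j k / (qpoch 0 0 i * qpoch 0 0 j * qpoch 0 0 k)) has_sum 1) UNIV"
proof (rule has_sum_finite_neutralI[of "{(0, 0, 0)}"])
  have "e 0 0 0 = 0"
    using assms by simp
  then show "1 = (\<Sum>x\<in>{(0, 0, 0)}. (\<lambda>(i, j, k). (0::complex) ^ e i j k / (qpoch 0 0 i * qpoch 0 0 j * qpoch 0 0 k)) x)"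
    by simp
qed (use assms in auto)

theorem theorem4p14:
  fixes q :: complex
  assumes "norm q < 1"
  shows "(((\<lambda>(i, j, k). q ^ (4 * i\<^sup>2 + 4 * i * j + i * k + (3 * j\<^sup>2 - j) div 2 + (k\<^sup>2 + k) div 2)
            / (qpoch q q i * qpoch q q j * qpoch q q k))
          has_sum (qpoch_inf (- q) q / (qpoch_inf q (q ^ 5) * qpoch_inf (q ^ 4) (q ^ 5))))
         (UNIV :: (nat \<times> nat \<times> nat) set)) \<and>
         ((\<lambda>(i, j, k). q ^ (4 * i\<^sup>2 + 4 * i * j + i * k + 2 * i + (3 * j\<^sup>2 + j) div 2 + (k\<^sup>2 + k) div 2)
            / (qpoch q q i * qpoch q q j * qpoch q q k))
          has_sum (qpoch_inf (- q) q / (qpoch_inf (q ^ 2) (q ^ 5) * qpoch_inf (q ^ 3) (q ^ 5))))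
         (UNIV :: (nat \<times> nat \<times> nat) set)"
proof -
  have exponents: "4 * i\<^sup>2 + 4 * i * j + i * k + (3 * j\<^sup>2 - j) div 2 + (k\<^sup>2 + k) div 2
      = (2 * i + j)\<^sup>2 + 0 * (2 * i + j) + (j choose 2) + i * k + (Suc k choose 2)"
    "4 * i\<^sup>2 + 4 * i * j + i * k + 2 * i + (3 * j\<^sup>2 + j) div 2 + (k\<^sup>2 + k) div 2
      = (2 * i + j)\<^sup>2 + 1 * (2 * i + j) + (j choose 2) + i * k + (Suc k choose 2)" for i j k :: nat
    unfolding exponent_minus exponent_plus exponent_k by (simp_all add: power2_eq_square algebra_simps)
  show ?thesis
  proof (cases "q = 0")
    case True
    then have products: "qpoch_inf (- q) q / (qpoch_inf q (q ^ 5) * qpoch_inf (q ^ 4) (q ^ 5)) = 1"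
      "qpoch_inf (- q) q / (qpoch_inf (q ^ 2) (q ^ 5) * qpoch_inf (q ^ 3) (q ^ 5)) = 1"
      by (simp_all add: qpoch_inf_def)
    show ?thesis
      unfolding products unfolding exponents True
      by (intro conjI has_sum_zero_power_triple) (auto simp: Suc_choose_two)
  next
    case False
    with assms have q: "norm q < 1" "q \<noteq> 0"
      by simp_all
    have "((\<lambda>(i, j, k). q ^ ((2 * i + j)\<^sup>2 + 0 * (2 * i + j) + (j choose 2) + i * k + (Suc k choose 2))
        / (qpoch q q i * qpoch q q j * qpoch q q k))
        has_sum qpoch_inf (-q) q * (1 / (qpoch_inf q (q ^ 5) * qpoch_inf (q ^ 4) (q ^ 5)))) UNIV"
      by (rule triple_has_sum[OF q]) (use rogers_ramanujan(1)[OF q] in simp)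
    moreover have "((\<lambda>(i, j, k). q ^ ((2 * i + j)\<^sup>2 + 1 * (2 * i + j) + (j choose 2) + i * k + (Suc k choose 2))
        / (qpoch q q i * qpoch q q j * qpoch q q k))
        has_sum qpoch_inf (-q) q * (1 / (qpoch_inf (q ^ 2) (q ^ 5) * qpoch_inf (q ^ 3) (q ^ 5)))) UNIV"
      by (rule triple_has_sum[OF q]) (use rogers_ramanujan(2)[OF q] in simp)
    ultimately show ?thesis
      unfolding exponents by simp
  qed
qed

end
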